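(* Fix $\alpha_0>d/2$ and let $C_0=K_0+K_1(\alpha_0)$. Let $Q\in\mathcal M^{\alpha_0}$ be invertible with $Q^{-1}\in\mathcal M^{\alpha_0}$, and assume $$C_0\|Q-I\|_{\alpha_0}\le\tfrac1{10},\qquad C_0\|Q^{-1}-I\|_{\alpha_0}\le\tfrac1{10}.$$ Then for any $P,P'\in\mathcal M^{\alpha_0}$, the equation $$\overline{Q^{-1}(X+P)Q+P'}=0$$ has a unique solution $X\in\mathcal M_0^\infty$, and it satisfies $$\|X\|_{\alpha_0}\le2\big(\|Q^{-1}PQ\|_{\alpha_0}+\|P'\|_{\alpha_0}\big).$$
   Context: Let $d\ge1$; $|\mathbf k|=\max_v|k_v|$, $\langle\mathbf k\rangle=\max\{1,|\mathbf k|\}$. $(\mathfrak B,\|\cdot\|_{\mathfrak B})$ is a Banach algebra of complex sequences indexed by $\mathbb Z^d$, pointwise operations, containing the constant sequence $1$ with norm $1$, translation invariant ($\|\sigma_{\mathbf j}a\|_{\mathfrak B}=\|a\|_{\mathfrak B}$, $(\sigma_{\mathbf j}a)_{\mathbf i}=a_{\mathbf i-\mathbf j}$). $\mathcal M$: matrices $A=(a_{\mathbf i,\mathbf j})$ with $\mathbf k$-diagonals $A_{\mathbf k}=(a_{\mathbf i,\mathbf i-\mathbf k})_{\mathbf i}\in\mathfrak B$; $\|A\|_s^2=\sum_{\mathbf k}\|A_{\mathbf k}\|_{\mathfrak B}^2\langle\mathbf k\rangle^{2s}$; $\mathcal M^s=\{A:\|A\|_s<\infty\}$; $\mathcal M^\infty=\bigcap_s\mathcal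 M^s$; $\mathcal M_0^\infty$ is the set of diagonal matrices in $\mathcal M^\infty$. For $A=(a_{\mathbf i,\mathbf j})$, $\overline A=\mathrm{diag}_{\mathbf i}(a_{\mathbf i,\mathbf i})$ is its main diagonal part. $I$ is the identity; products are matrix products. $K_0=\sqrt{20\sum_{\mathbf k}\langle\mathbf k\rangle^{-2\alpha_0}}$, $K_1(s)=(1-10^{-1/(2s)})^{-s}\sqrt{2\sum_{\mathbf k}\langle\mathbf k\rangle^{-2\alpha_0}}$. *)

theory Defs
  imports "HOL-Analysis.Analysis"
begin

text \<open>Indices are elements of Z^d, rendered as int^'d with 'd a finite type, d = CARD('d).
Sequences are functions (int^'d) => complex; matrices are functions (int^'d) => (int^'d) => complex.\<close>

type_synonym ('d) seq = "(int^'d) \<Rightarrow> complex"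
type_synonym ('d) mat = "(int^'d) \<Rightarrow> (int^'d) \<Rightarrow> complex"

definition supnorm_idx :: "int^('d::finite) \<Rightarrow> real" where
  "supnorm_idx k = Max (range (\<lambda>v. real_of_int \<bar>k $ v\<bar>))"

definition bracket :: "int^('d::finite) \<Rightarrow> real" where
  "bracket k = max 1 (supnorm_idx k)"

definition shift_seq :: "int^'d \<Rightarrow> ('d::finite) seq \<Rightarrow> 'd seq" where
  "shift_seq j a = (\<lambda>i. a (i - j))"

definition seq_banach_algebra :: "('d::finite) seq set \<Rightarrow> ('d seq \<Rightarrow> real) \<Rightarrow> bool" where
  "seq_banach_algebra B nB \<longleftrightarrow>
     (\<lambda>_. 0) \<in> B \<and> (\<lambda>_. 1) \<in> B \<and> nB (\<lambda>_. 1) = 1 \<and>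
     (\<forall>a\<in>B. \<forall>b\<in>B. (\<lambda>i. a i + b i) \<in> B \<and> (\<lambda>i. a i * b i) \<in> B) \<and>
     (\<forall>c. \<forall>a\<in>B. (\<lambda>i. c * a i) \<in> B) \<and>
     (\<forall>a\<in>B. nB a \<ge> 0 \<and> (nB a = 0 \<longleftrightarrow> a = (\<lambda>_. 0))) \<and>
     (\<forall>a\<in>B. \<forall>b\<in>B. nB (\<lambda>i. a i + b i) \<le> nB a + nB b) \<and>
     (\<forall>c. \<forall>a\<in>B. nB (\<lambda>i. c * a i) = cmod c * nB a) \<and>
     (\<forall>a\<in>B. \<forall>b\<in>B. nB (\<lambda>i. a i * b i) \<le> nB a * nB b) \<and>
     (\<forall>j. \<forall>a\<in>B. shift_seq j a \<in> B \<and> nB (shift_seq j a) = nB a) \<and>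
     (\<forall>f :: nat \<Rightarrow> 'd seq. (\<forall>n. f n \<in> B) \<longrightarrow>
        (\<forall>e>0. \<exists>N. \<forall>m\<ge>N. \<forall>n\<ge>N. nB (\<lambda>i. f m i - f n i) < e) \<longrightarrow>
        (\<exists>a\<in>B. (\<lambda>n. nB (\<lambda>i. f n i - a i)) \<longlonglongrightarrow> 0))"

definition diag_k :: "'d mat \<Rightarrow> int^'d \<Rightarrow> ('d::finite) seq" where
  "diag_k A k = (\<lambda>i. A i (i - k))"

definition in_M :: "('d::finite) seq set \<Rightarrow> 'd mat \<Rightarrow> bool" where
  "in_M B A \<longleftrightarrow> (\<forall>k. diag_k A k \<in> B)"

definition sq_terms :: "(('d::finite) seq \<Rightarrow> real) \<Rightarrow> real \<Rightarrow> 'd mat \<Rightarrow> int^'d \<Rightarrow> real" where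
  "sq_terms nB s A k = (nB (diag_k A k))\<^sup>2 * bracket k powr (2 * s)"

definition mnorm :: "(('d::finite) seq \<Rightarrow> real) \<Rightarrow> real \<Rightarrow> 'd mat \<Rightarrow> real" where
  "mnorm nB s A = sqrt (\<Sum>\<^sub>\<infinity>k. sq_terms nB s A k)"

definition M_s :: "('d::finite) seq set \<Rightarrow> ('d seq \<Rightarrow> real) \<Rightarrow> real \<Rightarrow> 'd mat set" where
  "M_s B nB s = {A. in_M B A \<and> sq_terms nB s A summable_on UNIV}"

definition M_inf :: "('d::finite) seq set \<Rightarrow> ('d seq \<Rightarrow> real) \<Rightarrow> 'd mat set" where
  "M_inf B nB = (\<Inter>s. M_s B nB s)"

definition M0_inf :: "('d::finite) seq set \<Rightarrow> ('d seq \<Rightarrow> real) \<Rightarrow> 'd mat set" where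
  "M0_inf B nB = {A \<in> M_inf B nB. \<forall>i j. i \<noteq> j \<longrightarrow> A i j = 0}"

definition mat_mult :: "('d::finite) mat \<Rightarrow> 'd mat \<Rightarrow> 'd mat" where
  "mat_mult A C = (\<lambda>i j. \<Sum>\<^sub>\<infinity>l. A i l * C l j)"

definition mat_add :: "('d::finite) mat \<Rightarrow> 'd mat \<Rightarrow> 'd mat" where
  "mat_add A C = (\<lambda>i j. A i j + C i j)"

definition mat_sub :: "('d::finite) mat \<Rightarrow> 'd mat \<Rightarrow> 'd mat" where
  "mat_sub A C = (\<lambda>i j. A i j - C i j)"

definition mat_id :: "('d::finite) mat" where
  "mat_id = (\<lambda>i j. if i = j then 1 else 0)"

definition main_diag :: "('d::finite) mat \<Rightarrow> 'd mat" where
  "main_diag A = (\<lambda>i j. if i = j then A i i else 0)"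

definition K0 :: "real \<Rightarrow> ('d::finite) itself \<Rightarrow> real" where
  "K0 a0 _ = sqrt (20 * (\<Sum>\<^sub>\<infinity>k::int^'d. bracket k powr (-2 * a0)))"

definition K1 :: "real \<Rightarrow> real \<Rightarrow> ('d::finite) itself \<Rightarrow> real" where
  "K1 a0 s _ = (1 - 10 powr (-1 / (2 * s))) powr (-s)
                * sqrt (2 * (\<Sum>\<^sub>\<infinity>k::int^'d. bracket k powr (-2 * a0)))"

end

theory Submission
  imports Defs
begin

(* On diagonal matrices X = diag(x) the equation reads T x = D, where T x is the main diagonal
   of Q^-1 diag(x) Q and D = -diag(Q^-1 P Q + P').  Writing Q^-1 = I + E and Q = I + F,
   T x - x = E_0 x + x F_0 + diag(E diag(x) F); summing the last term along the diagonals and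
   applying Cauchy-Schwarz bounds it by (|E|^2 + |F|^2)/2 |x|.  As C_0 >= K_0 >= sqrt 20 > 4,
   the hypotheses give |E|, |F| <= 1/40, so |T x - x| <= |x|/2 in the sequence algebra, and a
   contraction argument solves T x = D uniquely with |x| <= 2 |D|.  Finally |D| is bounded by
   the norms of Q^-1 P Q and P', since M^s is an algebra for s > d/2 (a weighted Young
   inequality) and the main diagonal of a matrix is dominated by its norm.  Throughout, point
   evaluations on the sequence algebra are bounded by its norm, by a Neumann series argument. *)

section \<open>Translation invariant sequence algebras\<close>

locale seq_algebra =
  fixes B :: "('d::finite) seq set" and nB :: "'d seq \<Rightarrow> real"
  assumes seq_banach_algebra: "seq_banach_algebra B nB"
begin

lemma zero_mem: "(\<lambda>_. 0) \<in> B"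
  using seq_banach_algebra unfolding seq_banach_algebra_def by blast

lemma one_mem: "(\<lambda>_. 1) \<in> B"
  using seq_banach_algebra unfolding seq_banach_algebra_def by blast

lemma nB_one: "nB (\<lambda>_. 1) = 1"
  using seq_banach_algebra unfolding seq_banach_algebra_def by blast

lemma add_mem: "a \<in> B \<Longrightarrow> b \<in> B \<Longrightarrow> (\<lambda>i. a i + b i) \<in> B"
  using seq_banach_algebra unfolding seq_banach_algebra_def by blast

lemma mult_mem: "a \<in> B \<Longrightarrow> b \<in> B \<Longrightarrow> (\<lambda>i. a i * b i) \<in> B"
  using seq_banach_algebra unfolding seq_banach_algebra_def by blast

lemma scale_mem: "a \<in> B \<Longrightarrow> (\<lambda>i. c * a i) \<in> B"
  using seq_banach_algebra unfolding seq_banach_algebra_def by blast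

lemma nB_nonneg: "a \<in> B \<Longrightarrow> nB a \<ge> 0"
  using seq_banach_algebra unfolding seq_banach_algebra_def by blast

lemma nB_eq_0_iff: "a \<in> B \<Longrightarrow> nB a = 0 \<longleftrightarrow> a = (\<lambda>_. 0)"
  using seq_banach_algebra unfolding seq_banach_algebra_def by blast

lemma nB_add_le: "a \<in> B \<Longrightarrow> b \<in> B \<Longrightarrow> nB (\<lambda>i. a i + b i) \<le> nB a + nB b"
  using seq_banach_algebra unfolding seq_banach_algebra_def by blast

lemma nB_scale: "a \<in> B \<Longrightarrow> nB (\<lambda>i. c * a i) = cmod c * nB a"
  using seq_banach_algebra unfolding seq_banach_algebra_def by blast

lemma nB_mult_le: "a \<in> B \<Longrightarrow> b \<in> B \<Longrightarrow> nB (\<lambda>i. a i * b i) \<le> nB a * nB b"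
  using seq_banach_algebra unfolding seq_banach_algebra_def by blast

lemma shift_mem: "a \<in> B \<Longrightarrow> shift_seq j a \<in> B"
  using seq_banach_algebra unfolding seq_banach_algebra_def by blast

lemma nB_shift: "a \<in> B \<Longrightarrow> nB (shift_seq j a) = nB a"
  using seq_banach_algebra unfolding seq_banach_algebra_def by blast

lemma cauchy_converges:
  assumes "\<And>n. f n \<in> B" and "\<And>e. e > 0 \<Longrightarrow> \<exists>N. \<forall>m\<ge>N. \<forall>n\<ge>N. nB (\<lambda>i. f m i - f n i) < e"
  shows "\<exists>a\<in>B. (\<lambda>n. nB (\<lambda>i. f n i - a i)) \<longlonglongrightarrow> 0"
  using seq_banach_algebra assms unfolding seq_banach_algebra_def by blast

lemma nB_zero: "nB (\<lambda>_. 0) = 0"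
  using nB_eq_0_iff[OF zero_mem] by simp

lemma nB_le_0_imp_eq_0: "a \<in> B \<Longrightarrow> nB a \<le> 0 \<Longrightarrow> a = (\<lambda>_. 0)"
  using nB_nonneg nB_eq_0_iff by force

lemma uminus_mem: "a \<in> B \<Longrightarrow> (\<lambda>i. - a i) \<in> B"
  using scale_mem[of a "-1"] by simp

lemma nB_uminus: "a \<in> B \<Longrightarrow> nB (\<lambda>i. - a i) = nB a"
  using nB_scale[of a "-1"] by simp

lemma diff_mem: "a \<in> B \<Longrightarrow> b \<in> B \<Longrightarrow> (\<lambda>i. a i - b i) \<in> B"
  using add_mem[of a "\<lambda>i. - b i"] uminus_mem[of b] by simp

lemma nB_diff_commute: "a \<in> B \<Longrightarrow> b \<in> B \<Longrightarrow> nB (\<lambda>i. a i - b i) = nB (\<lambda>i. b i - a i)"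
  using nB_uminus[of "\<lambda>i. b i - a i"] diff_mem[of b a] by simp

lemma nB_triangle:
  "a \<in> B \<Longrightarrow> b \<in> B \<Longrightarrow> c \<in> B \<Longrightarrow>
   nB (\<lambda>i. a i - c i) \<le> nB (\<lambda>i. a i - b i) + nB (\<lambda>i. b i - c i)"
  using nB_add_le[of "\<lambda>i. a i - b i" "\<lambda>i. b i - c i"] diff_mem by simp

lemma const_mem: "(\<lambda>_. c) \<in> B"
  using scale_mem[OF one_mem, of c] by simp

lemma sum_mem:
  assumes "finite F" "\<And>j. j \<in> F \<Longrightarrow> f j \<in> B"
  shows "(\<lambda>i. \<Sum>j\<in>F. f j i) \<in> B \<and> nB (\<lambda>i. \<Sum>j\<in>F. f j i) \<le> (\<Sum>j\<in>F. nB (f j))"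
  using assms
proof (induction F rule: finite_induct)
  case empty
  then show ?case using zero_mem nB_zero by simp
next
  case (insert x F)
  then have "f x \<in> B" "(\<lambda>i. \<Sum>j\<in>F. f j i) \<in> B" "nB (\<lambda>i. \<Sum>j\<in>F. f j i) \<le> (\<Sum>j\<in>F. nB (f j))"
    by auto
  with insert.hyps show ?case
    using add_mem nB_add_le[of "f x" "\<lambda>i. \<Sum>j\<in>F. f j i"] by auto
qed

lemma power_mem: "a \<in> B \<Longrightarrow> (\<lambda>i. a i ^ n) \<in> B \<and> nB (\<lambda>i. a i ^ n) \<le> nB a ^ n"
proof (induction n)
  case 0
  then show ?case using one_mem nB_one by simp
next
  case (Suc n)
  then show ?case
    using mult_mem[of a "\<lambda>i. a i ^ n"] nB_mult_le[of a "\<lambda>i. a i ^ n"] nB_nonneg[of a]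
    by (auto intro: order.trans mult_left_mono)
qed

lemma geometric_steps_nB_le:
  assumes fB: "\<And>n. f n \<in> B" and r: "0 \<le> r" "r < 1" and C: "0 \<le> C"
    and step: "\<And>n. nB (\<lambda>i. f (Suc n) i - f n i) \<le> C * r ^ n"
    and "n \<le> m"
  shows "nB (\<lambda>i. f m i - f n i) \<le> C * r ^ n / (1 - r)"
proof -
  have telescope: "nB (\<lambda>i. f (n + k) i - f n i) \<le> C * (r ^ n - r ^ (n + k)) / (1 - r)" for k
  proof (induction k)
    case 0
    then show ?case using nB_zero by simp
  next
    case (Suc k)
    have "nB (\<lambda>i. f (n + Suc k) i - f n i)
       \<le> nB (\<lambda>i. f (Suc (n + k)) i - f (n + k) i) + nB (\<lambda>i. f (n + k) i - f n i)"
      using nB_triangle[OF fB fB fB] by simp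
    also have "\<dots> \<le> C * r ^ (n + k) + C * (r ^ n - r ^ (n + k)) / (1 - r)"
      using step Suc by (intro add_mono) auto
    also have "\<dots> = C * (r ^ n - r ^ (n + Suc k)) / (1 - r)"
      using r by (simp add: field_simps)
    finally show ?case .
  qed
  obtain k where "m = n + k" using \<open>n \<le> m\<close> le_Suc_ex by blast
  moreover have "C * (r ^ n - r ^ (n + k)) / (1 - r) \<le> C * r ^ n / (1 - r)"
    using r C by (intro divide_right_mono mult_left_mono) auto
  ultimately show ?thesis using telescope[of k] by simp
qed

lemma geometric_cauchy_converges:
  assumes fB: "\<And>n. f n \<in> B" and r: "0 \<le> r" "r < 1" and C: "0 \<le> C"
    and step: "\<And>n. nB (\<lambda>i. f (Suc n) i - f n i) \<le> C * r ^ n"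
  shows "\<exists>a\<in>B. (\<lambda>n. nB (\<lambda>i. f n i - a i)) \<longlonglongrightarrow> 0"
proof (rule cauchy_converges[OF fB])
  note tail = geometric_steps_nB_le[OF fB r C step]
  fix e :: real assume "e > 0"
  have "(\<lambda>n. C * r ^ n / (1 - r)) \<longlonglongrightarrow> C * 0 / (1 - r)"
    using r by (intro tendsto_intros LIMSEQ_power_zero) auto
  then have "\<forall>\<^sub>F n in sequentially. C * r ^ n / (1 - r) < e"
    using \<open>e > 0\<close> by (simp add: order_tendstoD(2))
  then obtain N where N: "C * r ^ N / (1 - r) < e"
    by (auto simp: eventually_sequentially)
  have "C * r ^ n / (1 - r) \<le> C * r ^ N / (1 - r)" if "n \<ge> N" for n
    using r C that by (intro divide_right_mono mult_left_mono power_decreasing) auto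
  then have "nB (\<lambda>i. f m i - f n i) < e" if "m \<ge> N" "n \<ge> N" for m n
    using tail[of n m] tail[of m n] nB_diff_commute[OF fB fB, of m n] N that
    by (cases "n \<le> m") fastforce+
  then show "\<exists>N. \<forall>m\<ge>N. \<forall>n\<ge>N. nB (\<lambda>i. f m i - f n i) < e" by blast
qed

lemma neumann_inverse:
  assumes bB: "b \<in> B" and small: "nB b < 1"
  shows "\<exists>c\<in>B. \<forall>k. (1 - b k) * c k = 1"
proof -
  define r where "r = nB b"
  have r: "0 \<le> r" "r < 1" using nB_nonneg[OF bB] small unfolding r_def by auto
  define s where "s n = (\<lambda>k. \<Sum>m<n. b k ^ m)" for n
  have sB: "s n \<in> B" for n
    unfolding s_def using sum_mem[of "{..<n}" "\<lambda>m k. b k ^ m"] power_mem[OF bB] by auto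
  have step: "nB (\<lambda>k. s (Suc n) k - s n k) \<le> 1 * r ^ n" for n
    unfolding s_def r_def using power_mem[OF bB, of n] by simp
  obtain c where cB: "c \<in> B" and lim: "(\<lambda>n. nB (\<lambda>k. s n k - c k)) \<longlonglongrightarrow> 0"
    using geometric_cauchy_converges[OF sB r zero_le_one step] by blast
  define one_b where "one_b = (\<lambda>k. 1 - b k)"
  have obB: "one_b \<in> B" unfolding one_b_def using diff_mem[OF one_mem bB] .
  define z where "z = (\<lambda>k. one_b k * c k - 1)"
  have zB: "z \<in> B" unfolding z_def using diff_mem[OF mult_mem[OF obB cB] one_mem] .
  have z_le: "nB z \<le> nB one_b * nB (\<lambda>k. s n k - c k) + r ^ n" for n
  proof -
    have d: "(\<lambda>k. s n k - c k) \<in> B" using diff_mem[OF sB cB] .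
    have geometric_sum: "one_b k * s n k = 1 - b k ^ n" for k
      unfolding one_b_def s_def by (simp add: one_diff_power_eq)
    have "z = (\<lambda>k. (- (one_b k * (s n k - c k))) + (- (b k ^ n)))"
      unfolding z_def using geometric_sum by (auto simp: algebra_simps)
    then have "nB z \<le> nB (\<lambda>k. - (one_b k * (s n k - c k))) + nB (\<lambda>k. - (b k ^ n))"
      by (simp only:) (intro nB_add_le uminus_mem mult_mem[OF obB d] power_mem[OF bB, THEN conjunct1])
    also have "\<dots> \<le> nB one_b * nB (\<lambda>k. s n k - c k) + r ^ n"
      using nB_uminus mult_mem[OF obB d] nB_mult_le[OF obB d] power_mem[OF bB, of n]
      unfolding r_def by (intro add_mono) auto
    finally show ?thesis .
  qed
  have "(\<lambda>n. nB one_b * nB (\<lambda>k. s n k - c k) + r ^ n) \<longlonglongrightarrow> nB one_b * 0 + 0"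
    using r by (intro tendsto_intros lim LIMSEQ_power_zero) auto
  then have "nB z \<le> 0"
    using z_le by (intro LIMSEQ_le_const[OF _ exI[of _ 0]]) auto
  then have "z = (\<lambda>_. 0)" using nB_le_0_imp_eq_0[OF zB] by simp
  then show ?thesis using cB unfolding z_def one_b_def by (auto simp: fun_eq_iff)
qed

text \<open>If \<open>\<bar>a\<^sub>i\<bar> > \<parallel>a\<parallel>\<close>, then \<open>1 - a / a\<^sub>i\<close> would be invertible in \<open>B\<close>
  although it vanishes at \<open>i\<close>.\<close>

lemma norm_apply_le_nB:
  assumes aB: "a \<in> B"
  shows "cmod (a i) \<le> nB a"
proof (rule ccontr)
  assume "\<not> cmod (a i) \<le> nB a"
  then have lt: "nB a < cmod (a i)" and ai: "a i \<noteq> 0" using nB_nonneg[OF aB] by auto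
  define b where "b = (\<lambda>k. inverse (a i) * a k)"
  have "nB b = nB a / cmod (a i)"
    unfolding b_def using nB_scale[OF aB, of "inverse (a i)"]
    by (simp add: norm_inverse divide_inverse mult.commute)
  then have "nB b < 1" using lt ai by simp
  then obtain c where "\<forall>k. (1 - b k) * c k = 1"
    using neumann_inverse scale_mem[OF aB] unfolding b_def by blast
  then have "(1 - b i) * c i = 1" by blast
  moreover have "b i = 1" using ai unfolding b_def by simp
  ultimately show False by simp
qed

lemma norm_apply_diff_le_nB:
  "a \<in> B \<Longrightarrow> b \<in> B \<Longrightarrow> cmod (a i - b i) \<le> nB (\<lambda>k. a k - b k)"
  using norm_apply_le_nB[OF diff_mem] by blast

lemma tendsto_apply:
  assumes "\<And>n. f n \<in> B" "a \<in> B" "(\<lambda>n. nB (\<lambda>i. f n i - a i)) \<longlonglongrightarrow> 0"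
  shows "(\<lambda>n. f n i) \<longlonglongrightarrow> a i"
proof -
  have "(\<lambda>n. f n i - a i) \<longlonglongrightarrow> 0"
    by (rule Lim_null_comparison[OF _ assms(3)]) (use norm_apply_diff_le_nB assms in auto)
  then show ?thesis by (simp add: LIM_zero_iff)
qed

lemma limit_eq_pointwise_limit:
  assumes "\<And>n. f n \<in> B" "a \<in> B" "(\<lambda>n. nB (\<lambda>i. f n i - a i)) \<longlonglongrightarrow> 0"
    and "\<And>i. (\<lambda>n. f n i) \<longlonglongrightarrow> L i"
  shows "a = L"
  using LIMSEQ_unique[OF tendsto_apply[OF assms(1-3)] assms(4)] by (rule ext)

lemma nB_limit_le:
  assumes fB: "\<And>n. f n \<in> B" and aB: "a \<in> B" and lim: "(\<lambda>n. nB (\<lambda>i. f n i - a i)) \<longlonglongrightarrow> 0"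
    and le: "\<And>n. nB (f n) \<le> S"
  shows "nB a \<le> S"
proof -
  have "nB a \<le> S + nB (\<lambda>i. f n i - a i)" for n
    using nB_add_le[OF fB diff_mem[OF aB fB], of n n] nB_diff_commute[OF aB fB] le[of n] by simp
  moreover have "(\<lambda>n. S + nB (\<lambda>i. f n i - a i)) \<longlonglongrightarrow> S + 0" by (intro tendsto_intros lim)
  ultimately show ?thesis by (intro LIMSEQ_le_const[OF _ exI[of _ 0]]) auto
qed

end

lemma finite_chain_approximating_infsum:
  fixes h :: "'a \<Rightarrow> real"
  assumes hs: "h summable_on UNIV" and hnn: "\<And>j. h j \<ge> 0"
  obtains G where "\<And>n. finite (G n)" "\<And>n. G n \<subseteq> G (Suc n)"
    "\<And>n. (\<Sum>\<^sub>\<infinity>j. h j) - (1/2) ^ n \<le> sum h (G n)"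
proof -
  have "\<exists>F. finite F \<and> dist (sum h F) (\<Sum>\<^sub>\<infinity>j. h j) \<le> (1/2::real) ^ n" for n
    using infsum_finite_approximation[OF hs, of "(1/2) ^ n"] by auto
  then obtain F where F: "\<And>n. finite (F n)" "\<And>n. dist (sum h (F n)) (\<Sum>\<^sub>\<infinity>j. h j) \<le> (1/2) ^ n"
    by metis
  define G where "G n = (\<Union>m\<le>n. F m)" for n
  show ?thesis
  proof (rule that)
    show "finite (G n)" for n unfolding G_def using F(1) by auto
    show "G n \<subseteq> G (Suc n)" for n unfolding G_def by (auto intro: le_SucI)
    fix n
    have "sum h (F n) \<le> sum h (G n)"
      unfolding G_def by (rule sum_mono2) (use F(1) hnn in auto)
    moreover have "(\<Sum>\<^sub>\<infinity>j. h j) - (1/2) ^ n \<le> sum h (F n)"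
      using F(2)[of n] by (simp add: dist_real_def abs_le_iff)
    ultimately show "(\<Sum>\<^sub>\<infinity>j. h j) - (1/2) ^ n \<le> sum h (G n)" by linarith
  qed
qed

lemma norm_infsum_minus_sum_le:
  fixes f :: "'a \<Rightarrow> 'b::banach"
  assumes hs: "h summable_on UNIV" and le: "\<And>j. norm (f j) \<le> h j" and G: "finite G"
  shows "norm ((\<Sum>\<^sub>\<infinity>j. f j) - sum f G) \<le> (\<Sum>\<^sub>\<infinity>j. h j) - sum h G"
proof -
  have nfs: "(\<lambda>j. norm (f j)) summable_on UNIV"
    by (rule summable_on_comparison_test[OF hs]) (use le in auto)
  have "(\<Sum>\<^sub>\<infinity>j. f j) - sum f G = (\<Sum>\<^sub>\<infinity>j\<in>UNIV - G. f j)"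
    using infsum_Diff[OF abs_summable_summable[OF nfs] summable_on_finite[OF G]] G by simp
  also have "norm \<dots> \<le> (\<Sum>\<^sub>\<infinity>j\<in>UNIV - G. norm (f j))"
    by (intro norm_infsum_bound summable_on_subset_banach[OF nfs]) simp
  also have "\<dots> \<le> (\<Sum>\<^sub>\<infinity>j\<in>UNIV - G. h j)"
    by (intro infsum_mono summable_on_subset_banach[OF nfs] summable_on_subset_banach[OF hs] le) simp_all
  also have "\<dots> = (\<Sum>\<^sub>\<infinity>j. h j) - sum h G"
    using infsum_Diff[OF hs summable_on_finite[OF G]] G by simp
  finally show ?thesis .
qed

context seq_algebra
begin

lemma series_mem:
  fixes f :: "'a \<Rightarrow> 'd seq"
  assumes fB: "\<And>j. f j \<in> B" and sm: "(\<lambda>j. nB (f j)) summable_on UNIV"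
  shows "(\<lambda>i. \<Sum>\<^sub>\<infinity>j. f j i) \<in> B \<and> nB (\<lambda>i. \<Sum>\<^sub>\<infinity>j. f j i) \<le> (\<Sum>\<^sub>\<infinity>j. nB (f j))"
proof -
  obtain G where Gfin: "\<And>n. finite (G n)" and Gmono: "\<And>n. G n \<subseteq> G (Suc n)"
    and G_approx: "\<And>n. (\<Sum>\<^sub>\<infinity>j. nB (f j)) - (1/2) ^ n \<le> (\<Sum>j\<in>G n. nB (f j))"
    using finite_chain_approximating_infsum[OF sm nB_nonneg[OF fB]] by blast
  define S where "S = (\<Sum>\<^sub>\<infinity>j. nB (f j))"
  have sum_le_S: "(\<Sum>j\<in>H. nB (f j)) \<le> S" if "finite H" for H
    unfolding S_def by (rule finite_sum_le_infsum[OF sm that]) (auto simp: nB_nonneg[OF fB])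
  define s where "s n = (\<lambda>i. \<Sum>j\<in>G n. f j i)" for n
  have sB: "s n \<in> B" and s_le: "nB (s n) \<le> S" for n
  proof -
    have "s n \<in> B \<and> nB (s n) \<le> (\<Sum>j\<in>G n. nB (f j))"
      unfolding s_def using sum_mem[of "G n" f] Gfin fB by blast
    then show "s n \<in> B" "nB (s n) \<le> S" using sum_le_S[OF Gfin, of n] by auto
  qed
  have step: "nB (\<lambda>i. s (Suc n) i - s n i) \<le> 1 * (1/2) ^ n" for n
  proof -
    have "(\<lambda>i. s (Suc n) i - s n i) = (\<lambda>i. \<Sum>j\<in>G (Suc n) - G n. f j i)"
      unfolding s_def by (simp add: sum_diff[OF Gfin Gmono])
    then have "nB (\<lambda>i. s (Suc n) i - s n i) \<le> (\<Sum>j\<in>G (Suc n) - G n. nB (f j))"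
      using sum_mem[of "G (Suc n) - G n" f] Gfin fB by simp
    also have "\<dots> \<le> (1/2) ^ n"
      using sum_le_S[OF Gfin, of "Suc n"] G_approx[of n]
      unfolding sum_diff[OF Gfin Gmono] S_def by linarith
    finally show ?thesis by simp
  qed
  have "(0::real) \<le> 1/2" "(1/2::real) < 1" by simp_all
  from geometric_cauchy_converges[OF sB this zero_le_one step]
  obtain g where gB: "g \<in> B" and lim: "(\<lambda>n. nB (\<lambda>i. s n i - g i)) \<longlonglongrightarrow> 0"
    by blast
  have "(\<lambda>n. s n i) \<longlonglongrightarrow> (\<Sum>\<^sub>\<infinity>j. f j i)" for i
  proof -
    have "norm (s n i - (\<Sum>\<^sub>\<infinity>j. f j i)) \<le> (1/2) ^ n" for n
      using norm_infsum_minus_sum_le[OF sm norm_apply_le_nB[OF fB, where i=i] Gfin[of n]] G_approx[of n]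
      unfolding s_def by (subst norm_minus_commute) linarith
    then have "(\<lambda>n. s n i - (\<Sum>\<^sub>\<infinity>j. f j i)) \<longlonglongrightarrow> 0"
      by (intro Lim_null_comparison[OF _ LIMSEQ_power_zero[of "1/2::real"]]) auto
    then show ?thesis by (rule LIM_zero_cancel)
  qed
  then have g: "g = (\<lambda>i. \<Sum>\<^sub>\<infinity>j. f j i)" by (rule limit_eq_pointwise_limit[OF sB gB lim])
  have "nB g \<le> S" by (rule nB_limit_le[OF sB gB lim s_le])
  then show ?thesis using gB unfolding g S_def by simp
qed

end

section \<open>The weights \<open>\<langle>k\<rangle>\<^sup>s\<close> on \<open>\<int>\<^sup>d\<close>\<close>

lemma abs_le_supnorm_idx: "real_of_int \<bar>k $ v\<bar> \<le> supnorm_idx k"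
  unfolding supnorm_idx_def by (rule Max_ge) auto

lemma supnorm_idx_nonneg: "supnorm_idx k \<ge> 0"
  using abs_le_supnorm_idx[of k] by (meson abs_ge_zero of_int_0_le_iff order_trans)

lemma supnorm_idx_add_le: "supnorm_idx (j + m) \<le> supnorm_idx j + supnorm_idx (m::int^'d::finite)"
  unfolding supnorm_idx_def[of "j + m"]
proof (subst Max_le_iff, safe)
  fix v
  have "real_of_int \<bar>(j + m) $ v\<bar> \<le> real_of_int \<bar>j $ v\<bar> + real_of_int \<bar>m $ v\<bar>" by simp
  then show "real_of_int \<bar>(j + m) $ v\<bar> \<le> supnorm_idx j + supnorm_idx m"
    using abs_le_supnorm_idx[of j v] abs_le_supnorm_idx[of m v] by linarith
qed auto

lemma bracket_ge_1: "bracket k \<ge> 1"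
  unfolding bracket_def by simp

lemma bracket_pos: "bracket k > 0"
  using bracket_ge_1[of k] by simp

lemma bracket_0 [simp]: "bracket (0::int^'d::finite) = 1"
  unfolding bracket_def supnorm_idx_def by simp

lemma abs_le_bracket: "real_of_int \<bar>k $ v\<bar> \<le> bracket k"
  unfolding bracket_def using abs_le_supnorm_idx[of k v] by simp

lemma one_le_bracket_powr: "s \<ge> 0 \<Longrightarrow> 1 \<le> bracket k powr s"
  using ge_one_powr_ge_zero[OF bracket_ge_1] by blast

lemma bracket_add_le: "bracket (j + m) \<le> bracket j + bracket (m::int^'d::finite)"
  unfolding bracket_def
  using supnorm_idx_add_le[of j m] supnorm_idx_nonneg[of j] supnorm_idx_nonneg[of m]
  by (auto simp: max_def)

lemma bracket_powr_add_le:
  fixes j m :: "int^'d::finite"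
  assumes "s \<ge> 0"
  shows "bracket (j + m) powr s \<le> 2 powr s * (bracket j powr s + bracket m powr s)"
proof -
  have "bracket (j + m) powr s \<le> (2 * max (bracket j) (bracket m)) powr s"
    using assms bracket_add_le[of j m] less_imp_le[OF bracket_pos] by (intro powr_mono2) auto
  also have "\<dots> = 2 powr s * max (bracket j) (bracket m) powr s"
    using bracket_pos by (simp add: powr_mult)
  also have "max (bracket j) (bracket m) powr s \<le> bracket j powr s + bracket m powr s"
    by (simp add: max_def)
  finally show ?thesis by simp
qed

lemma summable_on_int_powr:
  assumes "r > 1"
  shows "(\<lambda>n::int. max 1 \<bar>real_of_int n\<bar> powr (- r)) summable_on UNIV"
proof -
  have "summable (\<lambda>n. real n powr (- r))" using assms by (subst summable_real_powr_iff) simp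
  then have "(\<lambda>n::nat. real n powr (- r)) summable_on UNIV"
    by (subst summable_on_UNIV_nonneg_real_iff) auto
  moreover have "(\<lambda>n::nat. if n = 0 then 1 else 0 :: real) summable_on UNIV"
    by (rule finite_nonzero_values_imp_summable_on) (auto simp: Collect_conv_if)
  ultimately have "(\<lambda>n::nat. real n powr (- r) + (if n = 0 then 1 else 0)) summable_on UNIV"
    by (rule summable_on_add)
  then have nat: "(\<lambda>n::nat. max 1 (real n) powr (- r)) summable_on UNIV"
    by (rule summable_on_comparison_test) (auto simp: max_def)
  have "(\<lambda>n::int. max 1 \<bar>real_of_int n\<bar> powr (- r)) summable_on range int"
    by (subst summable_on_reindex) (auto simp: o_def intro: nat)
  moreover have "(\<lambda>n::int. max 1 \<bar>real_of_int n\<bar> powr (- r)) summable_on range (\<lambda>n. - int n)"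
    by (subst summable_on_reindex) (auto simp: inj_on_def o_def intro: nat)
  ultimately have "(\<lambda>n::int. max 1 \<bar>real_of_int n\<bar> powr (- r)) summable_on range int \<union> range (\<lambda>n. - int n)"
    by (rule summable_on_union)
  moreover have "range int \<union> range (\<lambda>n. - int n) = UNIV"
  proof (intro set_eqI iffI)
    fix x :: int
    show "x \<in> range int \<union> range (\<lambda>n. - int n)"
      by (cases "x \<ge> 0") (auto intro: image_eqI[of _ _ "nat x"] image_eqI[of _ _ "nat (-x)"])
  qed simp
  ultimately show ?thesis by simp
qed

lemma summable_on_prod_coords:
  fixes h :: "int \<Rightarrow> real"
  assumes hs: "h summable_on UNIV" and hnn: "\<And>n. h n \<ge> 0"
  shows "(\<lambda>k::int^'d::finite. \<Prod>v\<in>UNIV. h (k $ v)) summable_on UNIV"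
proof (rule nonneg_bdd_above_summable_on)
  show "bdd_above (sum (\<lambda>k::int^'d. \<Prod>v\<in>UNIV. h (k $ v)) ` {F. F \<subseteq> UNIV \<and> finite F})"
  proof (rule bdd_aboveI2)
    fix F :: "(int^'d) set" assume "F \<in> {F. F \<subseteq> UNIV \<and> finite F}"
    then have fin: "finite F" by simp
    define N where "N = (\<Sum>k\<in>F. \<Sum>v\<in>UNIV. \<bar>k $ v\<bar>)"
    define cube where "cube = PiE (UNIV::'d set) (\<lambda>_. {-N..N})"
    have "\<bar>k $ v\<bar> \<le> N" if "k \<in> F" for k v
    proof -
      have "\<bar>k $ v\<bar> \<le> (\<Sum>v\<in>UNIV. \<bar>k $ v\<bar>)" by (rule member_le_sum) auto
      also have "\<dots> \<le> N" unfolding N_def by (rule member_le_sum[OF that _ fin]) (auto intro: sum_nonneg)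
      finally show ?thesis .
    qed
    then have F_sub: "F \<subseteq> vec_lambda ` cube"
      unfolding cube_def by (force simp: abs_le_iff intro: image_eqI[of _ _ "vec_nth _"])
    have inj: "inj_on (vec_lambda :: ('d \<Rightarrow> int) \<Rightarrow> int^'d) cube"
      by (rule inj_onI) (metis vec_lambda_inverse UNIV_I)
    have "(\<Sum>k\<in>F. \<Prod>v\<in>UNIV. h (k $ v)) \<le> (\<Sum>k\<in>vec_lambda ` cube. \<Prod>v\<in>UNIV. h (k $ v))"
      using F_sub hnn unfolding cube_def
      by (intro sum_mono2 finite_imageI finite_PiE prod_nonneg) auto
    also have "\<dots> = (\<Sum>p\<in>cube. \<Prod>v\<in>UNIV. h (p v))"
      by (subst sum.reindex[OF inj]) (auto intro!: sum.cong)
    also have "\<dots> = (\<Prod>v\<in>(UNIV::'d set). \<Sum>n\<in>{-N..N}. h n)"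
      unfolding cube_def by (subst prod_sum_PiE) auto
    also have "\<dots> \<le> (\<Prod>v\<in>(UNIV::'d set). \<Sum>\<^sub>\<infinity>n. h n)"
      by (intro prod_mono conjI sum_nonneg hnn finite_sum_le_infsum[OF hs]) auto
    finally show "(\<Sum>k\<in>F. \<Prod>v\<in>UNIV. h (k $ v)) \<le> (\<Sum>\<^sub>\<infinity>n. h n) ^ CARD('d)" by simp
  qed
qed (simp add: hnn prod_nonneg)

text \<open>Compare \<open>\<langle>k\<rangle>\<^sup>-\<^sup>t\<close> with the product of the one-dimensional weights
  \<open>\<langle>k\<^sub>v\<rangle>\<^sup>-\<^sup>t\<^sup>/\<^sup>d\<close>.\<close>

lemma summable_bracket_powr:
  assumes t: "t > real CARD('d::finite)"
  shows "(\<lambda>k::int^'d. bracket k powr (- t)) summable_on UNIV"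
proof -
  define r where "r = t / real CARD('d)"
  have r: "r > 1" unfolding r_def using t by simp
  have "bracket k powr (- t) = (\<Prod>v\<in>(UNIV::'d set). bracket k powr (- r))" for k :: "int^'d"
    using bracket_pos[of k] by (simp add: r_def powr_power)
  also have "\<dots> k \<le> (\<Prod>v\<in>UNIV. max 1 \<bar>real_of_int (k $ v)\<bar> powr (- r))" for k :: "int^'d"
    using r abs_le_bracket[of k] bracket_ge_1[of k]
    by (intro prod_mono conjI) (auto intro!: powr_mono2')
  finally show ?thesis
    by (intro summable_on_comparison_test[OF summable_on_prod_coords[OF summable_on_int_powr[OF r]]]) auto
qed

section \<open>Discrete convolution\<close>

lemma summable_on_abs_mult_of_squares:
  fixes f g :: "'a \<Rightarrow> real"
  assumes f: "(\<lambda>x. (f x)\<^sup>2) summable_on A" and g: "(\<lambda>x. (g x)\<^sup>2) summable_on A"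
  shows "(\<lambda>x. \<bar>f x * g x\<bar>) summable_on A"
proof (rule summable_on_comparison_test)
  show "(\<lambda>x. (f x)\<^sup>2 / 2 + (g x)\<^sup>2 / 2) summable_on A"
    using summable_on_add[OF summable_on_cmult_left[OF f] summable_on_cmult_left[OF g], of "1/2" "1/2"]
    by simp
  fix x
  have "2 * \<bar>f x\<bar> * \<bar>g x\<bar> \<le> (f x)\<^sup>2 + (g x)\<^sup>2"
    using sum_squares_bound[of "\<bar>f x\<bar>" "\<bar>g x\<bar>"] by (simp add: power2_abs)
  then show "\<bar>f x * g x\<bar> \<le> (f x)\<^sup>2 / 2 + (g x)\<^sup>2 / 2" by (simp add: abs_mult)
qed simp

lemma summable_on_mult_of_squares:
  fixes f g :: "'a \<Rightarrow> real"
  assumes "(\<lambda>x. (f x)\<^sup>2) summable_on A" and "(\<lambda>x. (g x)\<^sup>2) summable_on A"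
  shows "(\<lambda>x. f x * g x) summable_on A"
  using abs_summable_summable[of "\<lambda>x. f x * g x" A] summable_on_abs_mult_of_squares[OF assms]
  by simp

lemma infsum_mult_le_half_squares:
  fixes f g :: "'a \<Rightarrow> real"
  assumes f: "(\<lambda>x. (f x)\<^sup>2) summable_on A" and g: "(\<lambda>x. (g x)\<^sup>2) summable_on A"
  shows "(\<Sum>\<^sub>\<infinity>x\<in>A. f x * g x) \<le> (\<Sum>\<^sub>\<infinity>x\<in>A. (f x)\<^sup>2) / 2 + (\<Sum>\<^sub>\<infinity>x\<in>A. (g x)\<^sup>2) / 2"
proof -
  have halves: "((\<lambda>x. (f x)\<^sup>2 / 2 + (g x)\<^sup>2 / 2) has_sum
      ((\<Sum>\<^sub>\<infinity>x\<in>A. (f x)\<^sup>2) / 2 + (\<Sum>\<^sub>\<infinity>x\<in>A. (g x)\<^sup>2) / 2)) A"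
    using has_sum_add[OF has_sum_cmult_left[OF f[unfolded summable_iff_has_sum_infsum]]
        has_sum_cmult_left[OF g[unfolded summable_iff_has_sum_infsum]], of "1/2" "1/2"]
    by simp
  have "f x * g x \<le> (f x)\<^sup>2 / 2 + (g x)\<^sup>2 / 2" for x
    using sum_squares_bound[of "f x" "g x"] by simp
  then show ?thesis
    using infsum_mono[OF summable_on_mult_of_squares[OF f g] has_sum_imp_summable[OF halves]]
      infsumI[OF halves] by simp
qed

lemma infsum_Cauchy_Schwarz:
  fixes f g :: "'a \<Rightarrow> real"
  assumes f: "(\<lambda>x. (f x)\<^sup>2) summable_on A" and g: "(\<lambda>x. (g x)\<^sup>2) summable_on A"
    and fnn: "\<And>x. f x \<ge> 0" and gnn: "\<And>x. g x \<ge> 0"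
  shows "(\<Sum>\<^sub>\<infinity>x\<in>A. f x * g x)\<^sup>2 \<le> (\<Sum>\<^sub>\<infinity>x\<in>A. (f x)\<^sup>2) * (\<Sum>\<^sub>\<infinity>x\<in>A. (g x)\<^sup>2)"
proof -
  define F2 where "F2 = (\<Sum>\<^sub>\<infinity>x\<in>A. (f x)\<^sup>2)"
  define G2 where "G2 = (\<Sum>\<^sub>\<infinity>x\<in>A. (g x)\<^sup>2)"
  have "(\<Sum>\<^sub>\<infinity>x\<in>A. f x * g x) \<le> sqrt (F2 * G2)"
  proof (rule infsum_le_finite_sums[OF summable_on_mult_of_squares[OF f g]])
    fix S assume S: "finite S" "S \<subseteq> A"
    have "(\<Sum>x\<in>S. f x * g x)\<^sup>2 \<le> (\<Sum>x\<in>S. (f x)\<^sup>2) * (\<Sum>x\<in>S. (g x)\<^sup>2)"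
      by (rule Cauchy_Schwarz_ineq_sum)
    also have "\<dots> \<le> F2 * G2" unfolding F2_def G2_def
      by (intro mult_mono finite_sum_le_infsum f g S sum_nonneg infsum_nonneg) auto
    finally show "(\<Sum>x\<in>S. f x * g x) \<le> sqrt (F2 * G2)" by (simp add: real_le_rsqrt)
  qed
  moreover have "0 \<le> (\<Sum>\<^sub>\<infinity>x\<in>A. f x * g x)" by (intro infsum_nonneg) (simp add: fnn gnn)
  moreover have "F2 * G2 \<ge> 0" unfolding F2_def G2_def by (intro mult_nonneg_nonneg infsum_nonneg) auto
  ultimately show ?thesis unfolding F2_def[symmetric] G2_def[symmetric]
    by (metis power_mono real_sqrt_pow2)
qed

lemma infsum_sum_swap:
  fixes f :: "'b \<Rightarrow> 'a \<Rightarrow> real"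
  assumes "finite F" "\<And>k. k \<in> F \<Longrightarrow> f k summable_on A"
  shows "(\<Sum>k\<in>F. \<Sum>\<^sub>\<infinity>x\<in>A. f k x) = (\<Sum>\<^sub>\<infinity>x\<in>A. \<Sum>k\<in>F. f k x)
     \<and> (\<lambda>x. \<Sum>k\<in>F. f k x) summable_on A"
  using assms
proof (induction F rule: finite_induct)
  case (insert y F)
  then have "(\<Sum>k\<in>F. \<Sum>\<^sub>\<infinity>x\<in>A. f k x) = (\<Sum>\<^sub>\<infinity>x\<in>A. \<Sum>k\<in>F. f k x)"
    and sF: "(\<lambda>x. \<Sum>k\<in>F. f k x) summable_on A" and sy: "f y summable_on A" by auto
  then show ?case using insert.hyps infsum_add[OF sy sF] summable_on_add[OF sy sF] by simp
qed simp

definition conv :: "(int^'d::finite \<Rightarrow> real) \<Rightarrow> (int^'d \<Rightarrow> real) \<Rightarrow> int^'d \<Rightarrow> real" where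
  "conv a c k = (\<Sum>\<^sub>\<infinity>j. a j * c (k - j))"

lemma summable_on_reflect_iff:
  fixes v :: "int^'d::finite \<Rightarrow> real"
  shows "(\<lambda>j. v (k - j)) summable_on UNIV \<longleftrightarrow> v summable_on UNIV"
  by (rule summable_on_reindex_bij_witness[where i="\<lambda>m. k - m" and j="\<lambda>m. k - m"]) auto

lemma infsum_reflect:
  fixes v :: "int^'d::finite \<Rightarrow> real"
  shows "(\<Sum>\<^sub>\<infinity>j. v (k - j)) = (\<Sum>\<^sub>\<infinity>j. v j)"
  by (rule infsum_reindex_bij_witness[where i="\<lambda>m. k - m" and j="\<lambda>m. k - m"]) auto

lemma summable_on_translate_iff:
  fixes v :: "int^'d::finite \<Rightarrow> real"
  shows "(\<lambda>l. v (l - j)) summable_on UNIV \<longleftrightarrow> v summable_on UNIV"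
  by (rule summable_on_reindex_bij_witness[where i="\<lambda>m. m + j" and j="\<lambda>m. m - j"]) auto

lemma conv_nonneg: "(\<And>j. a j \<ge> 0) \<Longrightarrow> (\<And>j. c j \<ge> 0) \<Longrightarrow> conv a c k \<ge> 0"
  unfolding conv_def by (simp add: infsum_nonneg)

lemma summable_on_conv_summand:
  fixes u v :: "int^'d::finite \<Rightarrow> real"
  assumes unn: "\<And>j. u j \<ge> 0" and vnn: "\<And>j. v j \<ge> 0"
    and u1: "u summable_on UNIV" and v1: "v summable_on UNIV"
  shows "(\<lambda>j. u j * v (k - j)) summable_on UNIV"
proof (rule summable_on_comparison_test[OF summable_on_cmult_left[OF u1, of "\<Sum>\<^sub>\<infinity>j. v j"]])
  show "u j * v (k - j) \<le> u j * (\<Sum>\<^sub>\<infinity>j. v j)" for j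
    using finite_sum_le_infsum[OF v1, of "{k - j}"] vnn
    by (intro mult_left_mono) (auto simp: unn)
qed (simp add: unn vnn)


lemma summable_on_conv:
  fixes u v :: "int^'d::finite \<Rightarrow> real"
  assumes unn: "\<And>j. u j \<ge> 0" and vnn: "\<And>j. v j \<ge> 0"
    and u1: "u summable_on UNIV" and v1: "v summable_on UNIV"
  shows "conv u v summable_on UNIV"
proof (rule nonneg_bdd_above_summable_on)
  note summand = summable_on_conv_summand[OF unn vnn u1 v1]
  show "bdd_above (sum (conv u v) ` {F. F \<subseteq> UNIV \<and> finite F})"
  proof (rule bdd_aboveI2)
    fix F :: "(int^'d) set" assume "F \<in> {F. F \<subseteq> UNIV \<and> finite F}"
    then have fin: "finite F" by simp
    note swap = infsum_sum_swap[OF fin, of "\<lambda>k j. u j * v (k - j)" UNIV]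
    have "sum (conv u v) F = (\<Sum>\<^sub>\<infinity>j. \<Sum>k\<in>F. u j * v (k - j))"
      unfolding conv_def using swap summand by simp
    also have "\<dots> \<le> (\<Sum>\<^sub>\<infinity>j. u j * (\<Sum>\<^sub>\<infinity>j. v j))"
    proof (rule infsum_mono)
      show "(\<lambda>j. \<Sum>k\<in>F. u j * v (k - j)) summable_on UNIV" using swap summand by simp
      show "(\<lambda>j. u j * (\<Sum>\<^sub>\<infinity>j. v j)) summable_on UNIV" using summable_on_cmult_left[OF u1] by simp
      fix j
      have "(\<Sum>k\<in>F. v (k - j)) = (\<Sum>m\<in>(\<lambda>k. k - j) ` F. v m)"
        by (subst sum.reindex) (auto simp: inj_on_def)
      also have "\<dots> \<le> (\<Sum>\<^sub>\<infinity>j. v j)"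
        by (rule finite_sum_le_infsum[OF v1]) (auto simp: fin vnn)
      finally show "(\<Sum>k\<in>F. u j * v (k - j)) \<le> u j * (\<Sum>\<^sub>\<infinity>j. v j)"
        by (simp add: sum_distrib_left[symmetric] mult_left_mono unn)
    qed
    finally show "sum (conv u v) F \<le> (\<Sum>\<^sub>\<infinity>j. u j) * (\<Sum>\<^sub>\<infinity>j. v j)"
      by (simp add: infsum_cmult_left')
  qed
qed (simp add: conv_nonneg unn vnn)

text \<open>Cauchy-Schwarz against the weights \<open>v\<close> gives \<open>(u * v)\<^sup>2 \<le> \<parallel>v\<parallel>\<^sub>1 (u\<^sup>2 * v)\<close>.\<close>

lemma summable_sq_conv:
  fixes u v :: "int^'d::finite \<Rightarrow> real"
  assumes unn: "\<And>j. u j \<ge> 0" and vnn: "\<And>j. v j \<ge> 0"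
    and u2: "(\<lambda>j. (u j)\<^sup>2) summable_on UNIV" and v1: "v summable_on UNIV"
  shows "(\<lambda>k. (conv u v k)\<^sup>2) summable_on UNIV"
proof (rule summable_on_comparison_test)
  define V where "V = (\<Sum>\<^sub>\<infinity>j. v j)"
  show "(\<lambda>k. V * conv (\<lambda>j. (u j)\<^sup>2) v k) summable_on UNIV"
    by (intro summable_on_cmult_right summable_on_conv u2 v1) (simp_all add: vnn)
  fix k
  have sq: "(u j * sqrt (v (k - j)))\<^sup>2 = (u j)\<^sup>2 * v (k - j)" for j
    by (simp add: power_mult_distrib vnn)
  have "(conv u v k)\<^sup>2 = (\<Sum>\<^sub>\<infinity>j. (u j * sqrt (v (k - j))) * sqrt (v (k - j)))\<^sup>2"
    unfolding conv_def by (simp add: vnn mult.assoc)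
  also have "\<dots> \<le> (\<Sum>\<^sub>\<infinity>j. (u j * sqrt (v (k - j)))\<^sup>2) * (\<Sum>\<^sub>\<infinity>j. (sqrt (v (k - j)))\<^sup>2)"
  proof (rule infsum_Cauchy_Schwarz)
    show "(\<lambda>j. (u j * sqrt (v (k - j)))\<^sup>2) summable_on UNIV"
      unfolding sq
      by (rule summable_on_conv_summand) (simp_all add: vnn u2 v1)
    show "(\<lambda>j. (sqrt (v (k - j)))\<^sup>2) summable_on UNIV"
      using v1 summable_on_reflect_iff[of v k] by (simp add: vnn)
  qed (auto simp: unn vnn)
  also have "\<dots> = V * conv (\<lambda>j. (u j)\<^sup>2) v k"
    unfolding V_def conv_def sq using infsum_reflect[of v k] by (simp add: vnn mult.commute)
  finally show "(conv u v k)\<^sup>2 \<le> V * conv (\<lambda>j. (u j)\<^sup>2) v k" .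
qed simp

lemma sq_le_sq_mult_bracket_powr: "s \<ge> 0 \<Longrightarrow> x\<^sup>2 \<le> (x * bracket k powr s)\<^sup>2"
  using one_le_power[OF one_le_bracket_powr, of s k 2]
  by (simp add: power_mult_distrib mult_le_cancel_left1)

lemma summable_sq_of_weighted_sq:
  fixes a :: "int^'d::finite \<Rightarrow> real"
  assumes "s \<ge> 0" and "(\<lambda>k. (a k * bracket k powr s)\<^sup>2) summable_on UNIV"
  shows "(\<lambda>k. (a k)\<^sup>2) summable_on UNIV"
  by (rule summable_on_comparison_test[OF assms(2)]) (simp_all add: sq_le_sq_mult_bracket_powr assms(1))

text \<open>Cauchy-Schwarz against \<open>\<langle>k\<rangle>\<^sup>-\<^sup>s\<close>, which is square summable because \<open>2s > d\<close>.\<close>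

lemma summable_of_weighted_sq:
  fixes a :: "int^'d::finite \<Rightarrow> real"
  assumes s: "2 * s > real CARD('d)" and aw: "(\<lambda>k. (a k * bracket k powr s)\<^sup>2) summable_on UNIV"
    and ann: "\<And>k. a k \<ge> 0"
  shows "a summable_on UNIV"
proof -
  have inverse_sq: "(inverse (bracket k powr s))\<^sup>2 = bracket k powr (- (2 * s))" for k :: "int^'d"
    using bracket_pos[of k] by (simp add: powr_minus[symmetric] power_inverse powr_power)
  have "(\<lambda>k::int^'d. (inverse (bracket k powr s))\<^sup>2) summable_on UNIV"
    unfolding inverse_sq by (rule summable_bracket_powr[OF s])
  then have "(\<lambda>k. (a k * bracket k powr s) * inverse (bracket k powr s)) summable_on UNIV"
    by (rule summable_on_mult_of_squares[OF aw])
  moreover have "(a k * bracket k powr s) * inverse (bracket k powr s) = a k" for k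
    using bracket_pos[of k] by simp
  ultimately show ?thesis by simp
qed

text \<open>Peetre's inequality \<open>\<langle>k\<rangle>\<^sup>s \<le> 2\<^sup>s (\<langle>j\<rangle>\<^sup>s + \<langle>k - j\<rangle>\<^sup>s)\<close> moves the
  weight onto one factor.\<close>

lemma conv_mult_bracket_powr_le:
  fixes a c :: "int^'d::finite \<Rightarrow> real" and s :: real
  defines "W k \<equiv> bracket k powr s"
  assumes ann: "\<And>j. a j \<ge> 0" and cnn: "\<And>j. c j \<ge> 0" and s: "s \<ge> 0"
    and a2: "(\<lambda>k. (a k)\<^sup>2) summable_on UNIV" and c2: "(\<lambda>k. (c k)\<^sup>2) summable_on UNIV"
    and aw: "(\<lambda>k. (a k * W k)\<^sup>2) summable_on UNIV" and cw: "(\<lambda>k. (c k * W k)\<^sup>2) summable_on UNIV"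
  shows "conv a c k * W k \<le> 2 powr s * (conv (\<lambda>j. a j * W j) c k + conv (\<lambda>j. c j * W j) a k)"
proof -
  have reflect2: "(\<lambda>j. (g (k - j))\<^sup>2) summable_on UNIV"
    if "(\<lambda>j. (g j)\<^sup>2) summable_on UNIV" for g :: "int^'d \<Rightarrow> real"
    using that summable_on_reflect_iff[of "\<lambda>j. (g j)\<^sup>2" k] by simp
  have sm0: "(\<lambda>j. a j * c (k - j)) summable_on UNIV"
    by (rule summable_on_mult_of_squares[OF a2 reflect2[OF c2]])
  have sm1: "(\<lambda>j. (a j * W j) * c (k - j)) summable_on UNIV"
    by (rule summable_on_mult_of_squares[OF aw reflect2[OF c2]])
  have sm2: "(\<lambda>j. a j * (c (k - j) * W (k - j))) summable_on UNIV"
    by (rule summable_on_mult_of_squares[OF a2 reflect2[OF cw]])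
  have "conv a c k * W k = (\<Sum>\<^sub>\<infinity>j. a j * c (k - j) * W k)"
    unfolding conv_def by (simp add: infsum_cmult_left')
  also have "\<dots> \<le> (\<Sum>\<^sub>\<infinity>j. 2 powr s * ((a j * W j) * c (k - j) + a j * (c (k - j) * W (k - j))))"
  proof (rule infsum_mono)
    show "(\<lambda>j. a j * c (k - j) * W k) summable_on UNIV" using summable_on_cmult_left[OF sm0] .
    show "(\<lambda>j. 2 powr s * ((a j * W j) * c (k - j) + a j * (c (k - j) * W (k - j)))) summable_on UNIV"
      using summable_on_cmult_right[OF summable_on_add[OF sm1 sm2]] .
    fix j
    have "W k \<le> 2 powr s * (W j + W (k - j))"
      unfolding W_def using bracket_powr_add_le[OF s, of j "k - j"] by simp
    then have "a j * c (k - j) * W k \<le> a j * c (k - j) * (2 powr s * (W j + W (k - j)))"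
      by (intro mult_left_mono) (auto simp: ann cnn)
    then show "a j * c (k - j) * W k \<le> 2 powr s * ((a j * W j) * c (k - j) + a j * (c (k - j) * W (k - j)))"
      by (simp add: algebra_simps)
  qed
  also have "\<dots> = 2 powr s * ((\<Sum>\<^sub>\<infinity>j. (a j * W j) * c (k - j)) + (\<Sum>\<^sub>\<infinity>j. a j * (c (k - j) * W (k - j))))"
    by (simp add: infsum_cmult_right' infsum_add[OF sm1 sm2])
  also have "(\<Sum>\<^sub>\<infinity>j. a j * (c (k - j) * W (k - j))) = conv (\<lambda>j. c j * W j) a k"
    unfolding conv_def
    by (rule infsum_reindex_bij_witness[where i="\<lambda>m. k - m" and j="\<lambda>m. k - m"]) auto
  finally show ?thesis by (simp add: conv_def)
qed


lemma summable_weighted_sq_conv: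
  fixes a c :: "int^'d::finite \<Rightarrow> real"
  assumes ann: "\<And>j. a j \<ge> 0" and cnn: "\<And>j. c j \<ge> 0" and s: "2 * s > real CARD('d)"
    and aw: "(\<lambda>k. (a k * bracket k powr s)\<^sup>2) summable_on UNIV"
    and cw: "(\<lambda>k. (c k * bracket k powr s)\<^sup>2) summable_on UNIV"
  shows "(\<lambda>k. (conv a c k * bracket k powr s)\<^sup>2) summable_on UNIV"
proof (rule summable_on_comparison_test)
  define W where "W k = bracket k powr s" for k :: "int^'d"
  have s0: "s \<ge> 0" using s by (smt (verit) of_nat_0_le_iff)
  have Wnn: "W k \<ge> 0" for k unfolding W_def by simp
  define Y1 where "Y1 = conv (\<lambda>j. a j * W j) c"
  define Y2 where "Y2 = conv (\<lambda>j. c j * W j) a"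
  have Y1: "(\<lambda>k. (Y1 k)\<^sup>2) summable_on UNIV" "Y1 k \<ge> 0" for k unfolding Y1_def
    using summable_of_weighted_sq[OF s _ cnn] aw cw ann cnn Wnn unfolding W_def
    by (auto intro!: summable_sq_conv conv_nonneg)
  have Y2: "(\<lambda>k. (Y2 k)\<^sup>2) summable_on UNIV" "Y2 k \<ge> 0" for k unfolding Y2_def
    using summable_of_weighted_sq[OF s _ ann] aw cw ann cnn Wnn unfolding W_def
    by (auto intro!: summable_sq_conv conv_nonneg)
  show "(\<lambda>k. 2 * (2 powr s)\<^sup>2 * ((Y1 k)\<^sup>2 + (Y2 k)\<^sup>2)) summable_on UNIV"
    using summable_on_cmult_right[OF summable_on_add[OF Y1(1) Y2(1)]] .
  fix k
  have "conv a c k * W k \<le> 2 powr s * (Y1 k + Y2 k)"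
    unfolding Y1_def Y2_def W_def
    using summable_sq_of_weighted_sq[OF s0] aw cw
    by (intro conv_mult_bracket_powr_le ann cnn s0) auto
  then have "(conv a c k * W k)\<^sup>2 \<le> (2 powr s * (Y1 k + Y2 k))\<^sup>2"
    using conv_nonneg[OF ann cnn, where k=k] Wnn[of k] by (intro power_mono) auto
  also have "\<dots> \<le> 2 * (2 powr s)\<^sup>2 * ((Y1 k)\<^sup>2 + (Y2 k)\<^sup>2)"
    using sum_squares_bound[of "Y1 k" "Y2 k"] by (simp add: power_mult_distrib power2_sum)
  finally show "(conv a c k * bracket k powr s)\<^sup>2 \<le> 2 * (2 powr s)\<^sup>2 * ((Y1 k)\<^sup>2 + (Y2 k)\<^sup>2)"
    unfolding W_def .
qed simp

section \<open>The matrix classes \<open>M\<^sup>s\<close>\<close>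

lemma infsum_delta:
  "(\<Sum>\<^sub>\<infinity>l. if l = i then c else 0) = (c::'b::{topological_comm_monoid_add, t2_space})"
proof -
  have "(\<Sum>\<^sub>\<infinity>l. if l = i then c else 0) = (\<Sum>\<^sub>\<infinity>l\<in>{i}. if l = i then c else 0)"
    by (rule infsum_cong_neutral) auto
  then show ?thesis by simp
qed

lemma summable_on_delta: "(\<lambda>l. if l = i then c else 0) summable_on A"
  by (rule finite_nonzero_values_imp_summable_on) (auto intro: finite_subset[of _ "{i}"])

lemma sq_terms_eq: "sq_terms nB s A k = (nB (diag_k A k) * bracket k powr s)\<^sup>2"
  unfolding sq_terms_def using bracket_pos[of k]
  by (simp add: power_mult_distrib powr_power mult.commute)

lemma sq_terms_nonneg: "sq_terms nB s A k \<ge> 0"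
  unfolding sq_terms_def by simp

lemma mnorm_nonneg: "mnorm nB s A \<ge> 0"
  unfolding mnorm_def by (simp add: infsum_nonneg sq_terms_nonneg)

lemma mnorm_sq: "(mnorm nB s A)\<^sup>2 = (\<Sum>\<^sub>\<infinity>k. sq_terms nB s A k)"
  unfolding mnorm_def by (simp add: infsum_nonneg sq_terms_nonneg)

lemma diag_k_0: "diag_k A 0 = (\<lambda>i. A i i)"
  by (simp add: diag_k_def)

context seq_algebra
begin

lemma M_s_diag_mem: "A \<in> M_s B nB s \<Longrightarrow> diag_k A k \<in> B"
  unfolding M_s_def in_M_def by auto

lemma M_s_summable: "A \<in> M_s B nB s \<Longrightarrow> sq_terms nB s A summable_on UNIV"
  unfolding M_s_def by auto

lemma norm_entry_le: "A \<in> M_s B nB s \<Longrightarrow> cmod (A i l) \<le> nB (diag_k A (i - l))"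
  using norm_apply_le_nB[OF M_s_diag_mem, of A s "i - l" i] by (simp add: diag_k_def)

lemma summable_sq_nB_diag:
  assumes "A \<in> M_s B nB s" "s \<ge> 0"
  shows "(\<lambda>k. (nB (diag_k A k))\<^sup>2) summable_on UNIV"
  using M_s_summable[OF assms(1)] unfolding sq_terms_eq by (rule summable_sq_of_weighted_sq[OF assms(2)])

lemma infsum_sq_nB_diag_le:
  assumes "A \<in> M_s B nB s" "s \<ge> 0"
  shows "(\<Sum>\<^sub>\<infinity>k. (nB (diag_k A k))\<^sup>2) \<le> (mnorm nB s A)\<^sup>2"
  unfolding mnorm_sq sq_terms_eq
  using M_s_summable[OF assms(1)] unfolding sq_terms_eq
  by (intro infsum_mono summable_sq_nB_diag[OF assms] sq_le_sq_mult_bracket_powr assms(2))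

lemma nB_diag_0_le_mnorm:
  assumes "A \<in> M_s B nB s"
  shows "nB (\<lambda>i. A i i) \<le> mnorm nB s A"
proof -
  have "sq_terms nB s A 0 \<le> (\<Sum>\<^sub>\<infinity>k. sq_terms nB s A k)"
    using finite_sum_le_infsum[OF M_s_summable[OF assms], of "{0}"] by (simp add: sq_terms_nonneg)
  then have "(nB (\<lambda>i. A i i))\<^sup>2 \<le> (mnorm nB s A)\<^sup>2"
    unfolding mnorm_sq sq_terms_def by (simp add: diag_k_0)
  then show ?thesis using mnorm_nonneg[of nB s A] by (meson power2_le_imp_le)
qed

lemma summable_sq_row:
  assumes "A \<in> M_s B nB s" "s \<ge> 0"
  shows "(\<lambda>l. (cmod (A i l))\<^sup>2) summable_on UNIV"
proof (rule summable_on_comparison_test)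
  show "(\<lambda>l. (nB (diag_k A (i - l)))\<^sup>2) summable_on UNIV"
    using summable_sq_nB_diag[OF assms] summable_on_reflect_iff[of "\<lambda>k. (nB (diag_k A k))\<^sup>2" i]
    by simp
  show "(cmod (A i l))\<^sup>2 \<le> (nB (diag_k A (i - l)))\<^sup>2" for l
    using norm_entry_le[OF assms(1), of i l] by (intro power_mono) auto
qed simp

lemma summable_sq_col:
  assumes "A \<in> M_s B nB s" "s \<ge> 0"
  shows "(\<lambda>l. (cmod (A l j))\<^sup>2) summable_on UNIV"
proof (rule summable_on_comparison_test)
  show "(\<lambda>l. (nB (diag_k A (l - j)))\<^sup>2) summable_on UNIV"
    using summable_sq_nB_diag[OF assms] summable_on_translate_iff[of "\<lambda>k. (nB (diag_k A k))\<^sup>2" j]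
    by simp
  show "(cmod (A l j))\<^sup>2 \<le> (nB (diag_k A (l - j)))\<^sup>2" for l
    using norm_entry_le[OF assms(1), of l j] by (intro power_mono) auto
qed simp

lemma summable_on_mult_of_sq_norms:
  fixes a b :: "'a \<Rightarrow> complex"
  assumes "(\<lambda>l. (cmod (a l))\<^sup>2) summable_on A" "(\<lambda>l. (cmod (b l))\<^sup>2) summable_on A"
  shows "(\<lambda>l. a l * b l) summable_on A"
  using summable_on_abs_mult_of_squares[OF assms]
  by (simp add: summable_on_iff_abs_summable_on_complex norm_mult)

lemma summable_row_col:
  "A \<in> M_s B nB s \<Longrightarrow> C \<in> M_s B nB s \<Longrightarrow> s \<ge> 0 \<Longrightarrow> (\<lambda>l. A i l * C l j) summable_on UNIV"
  by (intro summable_on_mult_of_sq_norms summable_sq_row summable_sq_col)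

text \<open>The \<open>k\<close>-diagonal of \<open>A C\<close> is \<open>\<Sum>\<^sub>j A\<^sub>j \<sigma>\<^sub>j C\<^sub>k\<^sub>-\<^sub>j\<close>.\<close>

lemma diag_k_mat_mult:
  assumes A: "A \<in> M_s B nB s" and C: "C \<in> M_s B nB s" and s: "s \<ge> 0"
  shows "diag_k (mat_mult A C) k \<in> B \<and>
    nB (diag_k (mat_mult A C) k) \<le> conv (\<lambda>j. nB (diag_k A j)) (\<lambda>j. nB (diag_k C j)) k"
proof -
  define t where "t j = (\<lambda>i. diag_k A j i * shift_seq j (diag_k C (k - j)) i)" for j
  have "diag_k (mat_mult A C) k i = (\<Sum>\<^sub>\<infinity>j. t j i)" for i
    unfolding diag_k_def mat_mult_def t_def shift_seq_def
    by (rule infsum_reindex_bij_witness[where i="\<lambda>m. i - m" and j="\<lambda>m. i - m"])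
       (auto simp: algebra_simps)
  then have eq: "diag_k (mat_mult A C) k = (\<lambda>i. \<Sum>\<^sub>\<infinity>j. t j i)" by (rule ext)
  have tB: "t j \<in> B" for j
    unfolding t_def by (intro mult_mem shift_mem M_s_diag_mem[OF A] M_s_diag_mem[OF C])
  have t_le: "nB (t j) \<le> nB (diag_k A j) * nB (diag_k C (k - j))" for j
  proof -
    have "nB (t j) \<le> nB (diag_k A j) * nB (shift_seq j (diag_k C (k - j)))"
      unfolding t_def by (intro nB_mult_le shift_mem M_s_diag_mem[OF A] M_s_diag_mem[OF C])
    then show ?thesis using nB_shift[OF M_s_diag_mem[OF C]] by simp
  qed
  have cs: "(\<lambda>j. nB (diag_k A j) * nB (diag_k C (k - j))) summable_on UNIV"
    using summable_on_mult_of_squares[OF summable_sq_nB_diag[OF A s]]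
      summable_sq_nB_diag[OF C s] summable_on_reflect_iff[of "\<lambda>j. (nB (diag_k C j))\<^sup>2" k]
    by simp
  have ts: "(\<lambda>j. nB (t j)) summable_on UNIV"
    by (rule summable_on_comparison_test[OF cs]) (auto simp: t_le nB_nonneg[OF tB])
  have "nB (\<lambda>i. \<Sum>\<^sub>\<infinity>j. t j i) \<le> (\<Sum>\<^sub>\<infinity>j. nB (t j))" using series_mem[OF tB ts] by simp
  also have "\<dots> \<le> conv (\<lambda>j. nB (diag_k A j)) (\<lambda>j. nB (diag_k C j)) k"
    unfolding conv_def by (rule infsum_mono[OF ts cs]) (simp add: t_le)
  finally show ?thesis using series_mem[OF tB ts] unfolding eq by simp
qed

lemma mat_mult_M_s:
  assumes A: "A \<in> M_s B nB s" and C: "C \<in> M_s B nB s" and s: "2 * s > real CARD('d)"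
  shows "mat_mult A C \<in> M_s B nB s"
proof -
  have s0: "s \<ge> 0" using s by (smt (verit) of_nat_0_le_iff)
  note diag = diag_k_mat_mult[OF A C s0]
  have "(\<lambda>k. (conv (\<lambda>j. nB (diag_k A j)) (\<lambda>j. nB (diag_k C j)) k * bracket k powr s)\<^sup>2)
      summable_on UNIV"
    using M_s_summable[OF A] M_s_summable[OF C] nB_nonneg[OF M_s_diag_mem[OF A]]
      nB_nonneg[OF M_s_diag_mem[OF C]]
    unfolding sq_terms_eq by (intro summable_weighted_sq_conv[OF _ _ s])
  then have "sq_terms nB s (mat_mult A C) summable_on UNIV"
    unfolding sq_terms_eq
  proof (rule summable_on_comparison_test)
    fix k
    show "(nB (diag_k (mat_mult A C) k) * bracket k powr s)\<^sup>2 \<le>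
        (conv (\<lambda>j. nB (diag_k A j)) (\<lambda>j. nB (diag_k C j)) k * bracket k powr s)\<^sup>2"
      using diag[of k] nB_nonneg[OF diag[of k, THEN conjunct1]]
      by (intro power_mono mult_right_mono) auto
  qed simp
  then show ?thesis using diag unfolding M_s_def in_M_def by simp
qed

lemma mat_sub_id_M_s:
  assumes A: "A \<in> M_s B nB s"
  shows "mat_sub A mat_id \<in> M_s B nB s"
proof -
  have dg: "diag_k (mat_sub A mat_id) k = (\<lambda>i. diag_k A k i - (if k = 0 then 1 else 0))" for k
    unfolding diag_k_def mat_sub_def mat_id_def by auto
  have "in_M B (mat_sub A mat_id)" unfolding in_M_def dg
    using diff_mem[OF M_s_diag_mem[OF A] const_mem] by blast
  moreover have "sq_terms nB s (mat_sub A mat_id) k \<le>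
      sq_terms nB s A k + (if k = 0 then sq_terms nB s (mat_sub A mat_id) 0 else 0)" for k
    by (cases "k = 0") (auto simp: sq_terms_def dg sq_terms_nonneg)
  then have "sq_terms nB s (mat_sub A mat_id) summable_on UNIV"
    by (intro summable_on_comparison_test[OF summable_on_add[OF M_s_summable[OF A]
          summable_on_delta[of 0 "sq_terms nB s (mat_sub A mat_id) 0"]]])
       (auto simp: sq_terms_nonneg)
  ultimately show ?thesis unfolding M_s_def by simp
qed

lemma diagonal_M_s:
  assumes off: "\<forall>i j. i \<noteq> j \<longrightarrow> X i j = 0" and xB: "(\<lambda>i. X i i) \<in> B"
  shows "X \<in> M_s B nB s" and "mnorm nB s X = nB (\<lambda>i. X i i)"
proof -
  have dg: "diag_k X k = (if k = 0 then (\<lambda>i. X i i) else (\<lambda>_. 0))" for k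
    using off unfolding diag_k_def by auto
  have sq: "sq_terms nB s X k = (if k = 0 then (nB (\<lambda>i. X i i))\<^sup>2 else 0)" for k
    unfolding sq_terms_def dg by (auto simp: nB_zero)
  have "in_M B X" unfolding in_M_def dg using xB zero_mem by simp
  moreover have "sq_terms nB s X summable_on UNIV" unfolding sq by (rule summable_on_delta)
  ultimately show "X \<in> M_s B nB s" unfolding M_s_def by simp
  show "mnorm nB s X = nB (\<lambda>i. X i i)"
    unfolding mnorm_def sq infsum_delta using nB_nonneg[OF xB] by simp
qed

lemma M0_inf_iff: "X \<in> M0_inf B nB \<longleftrightarrow> (\<forall>i j. i \<noteq> j \<longrightarrow> X i j = 0) \<and> (\<lambda>i. X i i) \<in> B"
proof
  assume "X \<in> M0_inf B nB"
  then have "X \<in> M_s B nB 0" and "\<forall>i j. i \<noteq> j \<longrightarrow> X i j = 0"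
    unfolding M0_inf_def M_inf_def by auto
  then show "(\<forall>i j. i \<noteq> j \<longrightarrow> X i j = 0) \<and> (\<lambda>i. X i i) \<in> B"
    using M_s_diag_mem[of X 0 0] by (simp add: diag_k_0)
next
  assume "(\<forall>i j. i \<noteq> j \<longrightarrow> X i j = 0) \<and> (\<lambda>i. X i i) \<in> B"
  then show "X \<in> M0_inf B nB"
    using diagonal_M_s(1)[of X] unfolding M0_inf_def M_inf_def by auto
qed

end

section \<open>The diagonal equation\<close>

text \<open>\<open>diag_conj A C x\<close> is the main diagonal of \<open>A diag(x) C\<close>.\<close>

definition diag_conj :: "('d::finite) mat \<Rightarrow> 'd mat \<Rightarrow> 'd seq \<Rightarrow> 'd seq" where
  "diag_conj A C x = (\<lambda>i. \<Sum>\<^sub>\<infinity>l. A i l * x l * C l i)"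

context seq_algebra
begin

lemma summable_row_diag_col:
  assumes A: "A \<in> M_s B nB s" and C: "C \<in> M_s B nB s" and s: "s \<ge> 0" and xB: "x \<in> B"
  shows "(\<lambda>l. A i l * x l * C l j) summable_on UNIV"
proof (rule summable_on_mult_of_sq_norms[OF _ summable_sq_col[OF C s]])
  show "(\<lambda>l. (cmod (A i l * x l))\<^sup>2) summable_on UNIV"
  proof (rule summable_on_comparison_test[OF summable_on_cmult_left[OF summable_sq_row[OF A s]]])
    show "(cmod (A i l * x l))\<^sup>2 \<le> (cmod (A i l))\<^sup>2 * (nB x)\<^sup>2" for l
      using norm_apply_le_nB[OF xB, of l]
      by (simp add: norm_mult power_mult_distrib mult_left_mono power_mono)
  qed simp
qed

lemma diag_conj_diff:
  assumes "A \<in> M_s B nB s" "C \<in> M_s B nB s" "s \<ge> 0" "x \<in> B" "y \<in> B"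
  shows "diag_conj A C (\<lambda>i. x i - y i) = (\<lambda>i. diag_conj A C x i - diag_conj A C y i)"
proof
  fix i
  note sx = summable_row_diag_col[OF assms(1-4), of i i]
  note sy = summable_on_uminus[THEN iffD2, OF summable_row_diag_col[OF assms(1-3,5), of i i]]
  show "diag_conj A C (\<lambda>i. x i - y i) i = diag_conj A C x i - diag_conj A C y i"
    unfolding diag_conj_def using infsum_add[OF sx sy]
    by (simp add: infsum_uminus algebra_simps)
qed

lemma nB_diag_reflect_product:
  assumes A: "A \<in> M_s B nB s" and C: "C \<in> M_s B nB s" and s: "s \<ge> 0"
  shows "(\<lambda>j. nB (diag_k A j) * nB (diag_k C (- j))) summable_on UNIV"
    and "(\<Sum>\<^sub>\<infinity>j. nB (diag_k A j) * nB (diag_k C (- j))) \<le> (mnorm nB s A)\<^sup>2 / 2 + (mnorm nB s C)\<^sup>2 / 2"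
proof -
  have c2: "(\<lambda>j. (nB (diag_k C (- j)))\<^sup>2) summable_on UNIV"
    using summable_sq_nB_diag[OF C s] summable_on_reflect_iff[of "\<lambda>j. (nB (diag_k C j))\<^sup>2" 0] by simp
  show "(\<lambda>j. nB (diag_k A j) * nB (diag_k C (- j))) summable_on UNIV"
    by (rule summable_on_mult_of_squares[OF summable_sq_nB_diag[OF A s] c2])
  have "(\<Sum>\<^sub>\<infinity>j. (nB (diag_k C (- j)))\<^sup>2) = (\<Sum>\<^sub>\<infinity>j. (nB (diag_k C j))\<^sup>2)"
    using infsum_reflect[of "\<lambda>j. (nB (diag_k C j))\<^sup>2" 0] by simp
  then show "(\<Sum>\<^sub>\<infinity>j. nB (diag_k A j) * nB (diag_k C (- j))) \<le> (mnorm nB s A)\<^sup>2 / 2 + (mnorm nB s C)\<^sup>2 / 2"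
    using infsum_mult_le_half_squares[OF summable_sq_nB_diag[OF A s] c2]
      infsum_sq_nB_diag_le[OF A s] infsum_sq_nB_diag_le[OF C s] by simp
qed

text \<open>Writing \<open>l = i - j\<close>, the sum runs along the diagonals: its \<open>j\<close>-th term is
  \<open>A\<^sub>j \<sigma>\<^sub>j (x C\<^sub>-\<^sub>j)\<close>.\<close>

lemma diag_conj_bound:
  assumes A: "A \<in> M_s B nB s" and C: "C \<in> M_s B nB s" and s: "s \<ge> 0" and xB: "x \<in> B"
  shows "diag_conj A C x \<in> B \<and>
    nB (diag_conj A C x) \<le> ((mnorm nB s A)\<^sup>2 / 2 + (mnorm nB s C)\<^sup>2 / 2) * nB x"
proof -
  define ac where "ac j = nB (diag_k A j) * nB (diag_k C (- j))" for j
  define g where "g j = (\<lambda>i. diag_k A j i * shift_seq j (\<lambda>m. x m * diag_k C (- j) m) i)" for j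
  have "diag_conj A C x i = (\<Sum>\<^sub>\<infinity>j. g j i)" for i
    unfolding diag_conj_def g_def diag_k_def shift_seq_def
    by (rule infsum_reindex_bij_witness[where i="\<lambda>m. i - m" and j="\<lambda>m. i - m"])
       (auto simp: algebra_simps)
  then have eq: "diag_conj A C x = (\<lambda>i. \<Sum>\<^sub>\<infinity>j. g j i)" by (rule ext)
  have gB: "g j \<in> B" for j
    unfolding g_def by (intro mult_mem shift_mem M_s_diag_mem[OF A] M_s_diag_mem[OF C] xB)
  have g_le: "nB (g j) \<le> nB x * ac j" for j
  proof -
    have "nB (g j) \<le> nB (diag_k A j) * nB (\<lambda>m. x m * diag_k C (- j) m)"
      unfolding g_def
      using nB_mult_le[OF M_s_diag_mem[OF A] shift_mem[OF mult_mem[OF xB M_s_diag_mem[OF C]]]]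
        nB_shift[OF mult_mem[OF xB M_s_diag_mem[OF C]]] by simp
    also have "\<dots> \<le> nB (diag_k A j) * (nB x * nB (diag_k C (- j)))"
      by (intro mult_left_mono nB_mult_le xB M_s_diag_mem[OF C] nB_nonneg M_s_diag_mem[OF A])
    finally show ?thesis by (simp add: ac_def mult_ac)
  qed
  note ac = nB_diag_reflect_product[OF A C s, folded ac_def]
  have gs: "(\<lambda>j. nB (g j)) summable_on UNIV"
    by (rule summable_on_comparison_test[OF summable_on_cmult_right[OF ac(1), of "nB x"]])
       (auto simp: g_le nB_nonneg[OF gB])
  have "nB (diag_conj A C x) \<le> (\<Sum>\<^sub>\<infinity>j. nB (g j))" unfolding eq using series_mem[OF gB gs] by simp
  also have "\<dots> \<le> nB x * (\<Sum>\<^sub>\<infinity>j. ac j)"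
    using infsum_mono[OF gs summable_on_cmult_right[OF ac(1), of "nB x"]] g_le
    by (simp add: infsum_cmult_right')
  also have "\<dots> \<le> nB x * ((mnorm nB s A)\<^sup>2 / 2 + (mnorm nB s C)\<^sup>2 / 2)"
    using ac(2) nB_nonneg[OF xB] by (intro mult_left_mono) auto
  finally show ?thesis using series_mem[OF gB gs] unfolding eq by (simp add: mult.commute)
qed

lemma diag_conj_minus_id:
  assumes Qi: "Qi \<in> M_s B nB s" and Q: "Q \<in> M_s B nB s" and s: "s \<ge> 0" and xB: "x \<in> B"
  defines "E \<equiv> mat_sub Qi mat_id" and "F \<equiv> mat_sub Q mat_id"
  shows "diag_conj Qi Q x i - x i = E i i * x i + x i * F i i + diag_conj E F x i"
proof -
  have E: "E \<in> M_s B nB s" unfolding E_def by (rule mat_sub_id_M_s[OF Qi])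
  have F: "F \<in> M_s B nB s" unfolding F_def by (rule mat_sub_id_M_s[OF Q])
  define c where "c = E i i * x i + x i * F i i + x i"
  have "Qi i l * x l * Q l i = E i l * x l * F l i + (if l = i then c else 0)" for l
    by (cases "l = i") (auto simp: E_def F_def c_def mat_sub_def mat_id_def algebra_simps)
  then have "diag_conj Qi Q x i = (\<Sum>\<^sub>\<infinity>l. E i l * x l * F l i) + (\<Sum>\<^sub>\<infinity>l. if l = i then c else 0)"
    unfolding diag_conj_def by (simp only: infsum_add[OF summable_row_diag_col[OF E F s xB] summable_on_delta])
  then show ?thesis unfolding infsum_delta diag_conj_def c_def by simp
qed

lemma diag_conj_near_id:
  assumes Qi: "Qi \<in> M_s B nB s" and Q: "Q \<in> M_s B nB s" and s: "s \<ge> 0" and xB: "x \<in> B"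
    and a: "mnorm nB s (mat_sub Qi mat_id) \<le> a" and b: "mnorm nB s (mat_sub Q mat_id) \<le> b"
  shows "(\<lambda>i. diag_conj Qi Q x i - x i) \<in> B \<and>
    nB (\<lambda>i. diag_conj Qi Q x i - x i) \<le> (a + b + (a\<^sup>2 + b\<^sup>2) / 2) * nB x"
proof -
  define E where "E = mat_sub Qi mat_id"
  define F where "F = mat_sub Q mat_id"
  have E: "E \<in> M_s B nB s" unfolding E_def using mat_sub_id_M_s[OF Qi] .
  have F: "F \<in> M_s B nB s" unfolding F_def using mat_sub_id_M_s[OF Q] .
  note G = diag_conj_bound[OF E F s xB]
  have E0: "(\<lambda>i. E i i) \<in> B" "nB (\<lambda>i. E i i) \<le> a"
    using M_s_diag_mem[OF E, of 0] nB_diag_0_le_mnorm[OF E] a unfolding E_def diag_k_0 by auto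
  have F0: "(\<lambda>i. F i i) \<in> B" "nB (\<lambda>i. F i i) \<le> b"
    using M_s_diag_mem[OF F, of 0] nB_diag_0_le_mnorm[OF F] b unfolding F_def diag_k_0 by auto
  have Ex: "(\<lambda>i. E i i * x i) \<in> B" "nB (\<lambda>i. E i i * x i) \<le> a * nB x"
    using mult_mem[OF E0(1) xB] nB_mult_le[OF E0(1) xB] mult_right_mono[OF E0(2) nB_nonneg[OF xB]]
    by auto
  have xF: "(\<lambda>i. x i * F i i) \<in> B" "nB (\<lambda>i. x i * F i i) \<le> b * nB x"
    using mult_mem[OF xB F0(1)] nB_mult_le[OF xB F0(1)] mult_left_mono[OF F0(2) nB_nonneg[OF xB]]
    by (auto simp: mult.commute)
  have eq: "(\<lambda>i. diag_conj Qi Q x i - x i) = (\<lambda>i. (E i i * x i + x i * F i i) + diag_conj E F x i)"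
    using diag_conj_minus_id[OF Qi Q s xB] unfolding E_def F_def by simp
  have "(mnorm nB s E)\<^sup>2 \<le> a\<^sup>2" "(mnorm nB s F)\<^sup>2 \<le> b\<^sup>2"
    using a b mnorm_nonneg unfolding E_def F_def by (auto intro: power_mono)
  then have G_le: "((mnorm nB s E)\<^sup>2 / 2 + (mnorm nB s F)\<^sup>2 / 2) * nB x \<le> (a\<^sup>2 + b\<^sup>2) / 2 * nB x"
    using nB_nonneg[OF xB] by (intro mult_right_mono) auto
  have "nB (\<lambda>i. (E i i * x i + x i * F i i) + diag_conj E F x i) \<le> a * nB x + b * nB x +
      ((mnorm nB s E)\<^sup>2 / 2 + (mnorm nB s F)\<^sup>2 / 2) * nB x"
    using nB_add_le[OF add_mem[OF Ex(1) xF(1)] G[THEN conjunct1]] nB_add_le[OF Ex(1) xF(1)] Ex(2) xF(2) G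
    by linarith
  also have "\<dots> \<le> (a + b + (a\<^sup>2 + b\<^sup>2) / 2) * nB x"
    using G_le by (simp add: algebra_simps)
  finally show ?thesis
    unfolding eq using add_mem[OF add_mem[OF Ex(1) xF(1)] G[THEN conjunct1]] by simp
qed

end

context seq_algebra
begin

lemma fixed_point_contraction:
  assumes RB: "\<And>x. x \<in> B \<Longrightarrow> R x \<in> B"
    and R_diff: "\<And>x y. x \<in> B \<Longrightarrow> y \<in> B \<Longrightarrow> R (\<lambda>i. x i - y i) = (\<lambda>i. R x i - R y i)"
    and R_le: "\<And>x. x \<in> B \<Longrightarrow> nB (R x) \<le> \<epsilon> * nB x" and \<epsilon>: "0 \<le> \<epsilon>" "\<epsilon> < 1"
    and DB: "D \<in> B"
  shows "\<exists>z\<in>B. z = (\<lambda>i. D i + R z i)"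
proof -
  define y where "y = rec_nat D (\<lambda>_ z. (\<lambda>i. D i + R z i))"
  have y0: "y 0 = D" and yS: "y (Suc n) = (\<lambda>i. D i + R (y n) i)" for n unfolding y_def by simp_all
  have yB: "y n \<in> B" for n by (induction n) (auto simp: y0 yS DB intro: add_mem RB)
  have R_dist: "nB (\<lambda>i. R x i - R x' i) \<le> \<epsilon> * nB (\<lambda>i. x i - x' i)" if "x \<in> B" "x' \<in> B" for x x'
    using R_le[OF diff_mem[OF that]] R_diff[OF that] by simp
  define C where "C = nB (\<lambda>i. y (Suc 0) i - y 0 i)"
  have step: "nB (\<lambda>i. y (Suc n) i - y n i) \<le> C * \<epsilon> ^ n" for n
  proof (induction n)
    case (Suc n)
    have "(\<lambda>i. y (Suc (Suc n)) i - y (Suc n) i) = (\<lambda>i. R (y (Suc n)) i - R (y n) i)"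
      by (simp add: yS)
    then have "nB (\<lambda>i. y (Suc (Suc n)) i - y (Suc n) i) \<le> \<epsilon> * nB (\<lambda>i. y (Suc n) i - y n i)"
      using R_dist[OF yB yB] by simp
    also have "\<dots> \<le> \<epsilon> * (C * \<epsilon> ^ n)" using Suc \<epsilon> by (intro mult_left_mono) auto
    finally show ?case by (simp add: algebra_simps)
  qed (simp add: C_def)
  obtain z where zB: "z \<in> B" and lim: "(\<lambda>n. nB (\<lambda>i. y n i - z i)) \<longlonglongrightarrow> 0"
    using geometric_cauchy_converges[OF yB \<epsilon> _ step] nB_nonneg[OF diff_mem[OF yB yB]] C_def by auto
  define w where "w = (\<lambda>i. z i - (D i + R z i))"
  have wB: "w \<in> B" unfolding w_def by (intro diff_mem add_mem zB DB RB)
  have w_le: "nB w \<le> nB (\<lambda>i. y (Suc n) i - z i) + \<epsilon> * nB (\<lambda>i. y n i - z i)" for n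
  proof -
    have "w = (\<lambda>i. (z i - y (Suc n) i) + (R (y n) i - R z i))"
      unfolding w_def yS by auto
    then have "nB w \<le> nB (\<lambda>i. z i - y (Suc n) i) + nB (\<lambda>i. R (y n) i - R z i)"
      by (simp only:) (intro nB_add_le diff_mem zB yB RB)
    then show ?thesis using nB_diff_commute[OF zB yB] R_dist[OF yB zB, of n] by simp
  qed
  have "(\<lambda>n. nB (\<lambda>i. y (Suc n) i - z i) + \<epsilon> * nB (\<lambda>i. y n i - z i)) \<longlonglongrightarrow> 0 + \<epsilon> * 0"
    using LIMSEQ_Suc[OF lim] lim by (intro tendsto_intros) auto
  then have "nB w \<le> 0" using w_le by (intro LIMSEQ_le_const[OF _ exI[of _ 0]]) auto
  then have "w = (\<lambda>_. 0)" by (rule nB_le_0_imp_eq_0[OF wB])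
  then show ?thesis using zB unfolding w_def by (auto simp: fun_eq_iff)
qed

lemma near_identity_solvable:
  assumes T_mem: "\<And>x. x \<in> B \<Longrightarrow> (\<lambda>i. T x i - x i) \<in> B"
    and T_diff: "\<And>x y. x \<in> B \<Longrightarrow> y \<in> B \<Longrightarrow> T (\<lambda>i. x i - y i) = (\<lambda>i. T x i - T y i)"
    and T_near: "\<And>x. x \<in> B \<Longrightarrow> nB (\<lambda>i. T x i - x i) \<le> \<epsilon> * nB x" and \<epsilon>: "0 \<le> \<epsilon>" "\<epsilon> < 1"
    and DB: "D \<in> B"
  shows "\<exists>x\<in>B. T x = D \<and> (1 - \<epsilon>) * nB x \<le> nB D \<and> (\<forall>y\<in>B. T y = D \<longrightarrow> y = x)"
proof -
  define R where "R x = (\<lambda>i. x i - T x i)" for x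
  have RB: "R x \<in> B" and R_le: "nB (R x) \<le> \<epsilon> * nB x" if "x \<in> B" for x
    using uminus_mem[OF T_mem[OF that]] nB_uminus[OF T_mem[OF that]] T_near[OF that]
    unfolding R_def by simp_all
  have R_diff: "R (\<lambda>i. x i - y i) = (\<lambda>i. R x i - R y i)" if "x \<in> B" "y \<in> B" for x y
    unfolding R_def T_diff[OF that] by (auto simp: algebra_simps)
  obtain z where zB: "z \<in> B" and "z = (\<lambda>i. D i + R z i)"
    using fixed_point_contraction[OF RB R_diff R_le \<epsilon> DB] by blast
  then have Tz: "T z = D" unfolding R_def by (auto simp: fun_eq_iff)
  have "z = (\<lambda>i. D i + - (T z i - z i))" unfolding Tz[symmetric] by simp
  then have "nB z \<le> nB D + nB (\<lambda>i. - (T z i - z i))"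
    using nB_add_le[OF DB uminus_mem[OF T_mem[OF zB]]] by simp
  then have z_le: "(1 - \<epsilon>) * nB z \<le> nB D"
    using nB_uminus[OF T_mem[OF zB]] T_near[OF zB] by (simp add: algebra_simps)
  have "y = z" if yB: "y \<in> B" and Ty: "T y = D" for y
  proof -
    define w where "w = (\<lambda>i. y i - z i)"
    have wB: "w \<in> B" unfolding w_def using diff_mem[OF yB zB] .
    have "T w = (\<lambda>_. 0)" unfolding w_def T_diff[OF yB zB] Ty Tz by simp
    then have "nB w \<le> \<epsilon> * nB w" using T_near[OF wB] nB_uminus[OF wB] by simp
    then have "nB w \<le> 0" using \<epsilon> nB_nonneg[OF wB] by (simp add: mult_le_cancel_right1)
    then show "y = z" using nB_le_0_imp_eq_0[OF wB] unfolding w_def by (simp add: fun_eq_iff)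
  qed
  then show ?thesis using zB Tz z_le by blast
qed

end

lemma main_diag_eq_0_iff: "main_diag M = (\<lambda>_ _. 0) \<longleftrightarrow> (\<forall>i. M i i = 0)"
  unfolding main_diag_def by (metis (mono_tags, lifting))

context seq_algebra
begin

lemma mat_mult_add_diagonal:
  assumes off: "\<forall>i j. i \<noteq> j \<longrightarrow> X i j = 0"
    and A: "A \<in> M_s B nB s" and P: "P \<in> M_s B nB s" and s: "s \<ge> 0"
  shows "mat_mult A (mat_add X P) i l = A i l * X l l + mat_mult A P i l"
proof -
  have delta: "(\<lambda>m. A i m * X m l) = (\<lambda>m. if m = l then A i l * X l l else 0)"
    using off by auto
  have "mat_mult A (mat_add X P) i l = (\<Sum>\<^sub>\<infinity>m. A i m * X m l) + (\<Sum>\<^sub>\<infinity>m. A i m * P m l)"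
    unfolding mat_mult_def mat_add_def distrib_left
    by (rule infsum_add) (simp only: delta summable_on_delta, rule summable_row_col[OF A P s])
  then show ?thesis unfolding delta infsum_delta mat_mult_def .
qed

lemma main_diag_conj_eq_0_iff:
  assumes off: "\<forall>i j. i \<noteq> j \<longrightarrow> X i j = 0" and xB: "(\<lambda>i. X i i) \<in> B"
    and Qi: "Qi \<in> M_s B nB s" and Q: "Q \<in> M_s B nB s" and P: "P \<in> M_s B nB s"
    and s: "2 * s > real CARD('d)"
  shows "main_diag (mat_add (mat_mult (mat_mult Qi (mat_add X P)) Q) P') = (\<lambda>_ _. 0) \<longleftrightarrow>
    diag_conj Qi Q (\<lambda>i. X i i) = (\<lambda>i. - (mat_mult (mat_mult Qi P) Q i i + P' i i))"
proof -
  have s0: "s \<ge> 0" using s by (smt (verit) of_nat_0_le_iff)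
  have QiP: "mat_mult Qi P \<in> M_s B nB s" by (rule mat_mult_M_s[OF Qi P s])
  have "mat_mult (mat_mult Qi (mat_add X P)) Q i i =
      diag_conj Qi Q (\<lambda>i. X i i) i + mat_mult (mat_mult Qi P) Q i i" for i
  proof -
    have "mat_mult (mat_mult Qi (mat_add X P)) Q i i =
        (\<Sum>\<^sub>\<infinity>l. Qi i l * X l l * Q l i + mat_mult Qi P i l * Q l i)"
      unfolding mat_mult_def[of "mat_mult Qi (mat_add X P)"] mat_mult_add_diagonal[OF off Qi P s0]
      by (simp add: algebra_simps)
    also have "\<dots> = diag_conj Qi Q (\<lambda>i. X i i) i + mat_mult (mat_mult Qi P) Q i i"
      unfolding diag_conj_def mat_mult_def[of "mat_mult Qi P" Q]
      by (rule infsum_add[OF summable_row_diag_col[OF Qi Q s0 xB] summable_row_col[OF QiP Q s0]])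
    finally show ?thesis .
  qed
  then have "mat_add (mat_mult (mat_mult Qi (mat_add X P)) Q) P' i i =
      diag_conj Qi Q (\<lambda>i. X i i) i - (- (mat_mult (mat_mult Qi P) Q i i + P' i i))" for i
    by (simp add: mat_add_def)
  then show ?thesis unfolding main_diag_eq_0_iff by (simp add: fun_eq_iff)
qed

lemma unique_diagonal_solution:
  assumes x: "x \<in> B" "\<Phi> x" and uniq: "\<forall>y\<in>B. \<Phi> y \<longrightarrow> y = x"
    and iff: "\<And>X. X \<in> M0_inf B nB \<Longrightarrow> E X \<longleftrightarrow> \<Phi> (\<lambda>i. X i i)"
  shows "(\<exists>!X. X \<in> M0_inf B nB \<and> E X) \<and> (\<forall>X. X \<in> M0_inf B nB \<and> E X \<longrightarrow> mnorm nB s X = nB x)"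
proof -
  define X where "X = (\<lambda>i j. if i = j then x i else 0)"
  have X: "X \<in> M0_inf B nB \<and> E X" unfolding X_def using x iff[of X] M0_inf_iff by (simp add: X_def)
  have diag: "(\<forall>i j. i \<noteq> j \<longrightarrow> Y i j = 0) \<and> (\<lambda>i. Y i i) = x" if "Y \<in> M0_inf B nB \<and> E Y" for Y
    using that M0_inf_iff iff uniq by auto
  have "Y = X" if "Y \<in> M0_inf B nB \<and> E Y" for Y
    using diag[OF that] unfolding X_def by (auto simp: fun_eq_iff)
  with X have "\<exists>!X. X \<in> M0_inf B nB \<and> E X" by (rule ex1I)
  moreover have "mnorm nB s Y = nB x" if "Y \<in> M0_inf B nB \<and> E Y" for Y
    using diagonal_M_s(2) diag[OF that] x(1) by metis
  ultimately show ?thesis by blast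
qed

lemma neg_diag_add_bound:
  assumes "A \<in> M_s B nB s" "C \<in> M_s B nB s"
  shows "(\<lambda>i. - (A i i + C i i)) \<in> B \<and> nB (\<lambda>i. - (A i i + C i i)) \<le> mnorm nB s A + mnorm nB s C"
proof -
  have d0: "(\<lambda>i. A i i) \<in> B" "(\<lambda>i. C i i) \<in> B"
    using M_s_diag_mem[OF assms(1), of 0] M_s_diag_mem[OF assms(2), of 0] by (simp_all add: diag_k_0)
  then show ?thesis
    using nB_add_le[OF d0] nB_uminus[OF add_mem[OF d0]] uminus_mem[OF add_mem[OF d0]]
      nB_diag_0_le_mnorm[OF assms(1)] nB_diag_0_le_mnorm[OF assms(2)] by simp
qed

lemma diag_conj_near_id_half:
  assumes "Qi \<in> M_s B nB s" "Q \<in> M_s B nB s" "s \<ge> 0"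
    and "mnorm nB s (mat_sub Qi mat_id) \<le> 1/40" "mnorm nB s (mat_sub Q mat_id) \<le> 1/40"
    and xB: "x \<in> B"
  shows "(\<lambda>i. diag_conj Qi Q x i - x i) \<in> B" and "nB (\<lambda>i. diag_conj Qi Q x i - x i) \<le> 1/2 * nB x"
proof -
  note bound = diag_conj_near_id[OF assms(1-3) xB assms(4,5)]
  have "(1/40 + 1/40 + ((1/40)\<^sup>2 + (1/40)\<^sup>2) / 2 :: real) \<le> 1/2" by (simp add: power2_eq_square)
  from order.trans[OF bound[THEN conjunct2] mult_right_mono[OF this nB_nonneg[OF xB]]]
  show "nB (\<lambda>i. diag_conj Qi Q x i - x i) \<le> 1/2 * nB x" .
  show "(\<lambda>i. diag_conj Qi Q x i - x i) \<in> B" using bound ..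
qed

end

lemma K0_ge_4:
  assumes "2 * \<alpha> > real CARD('d::finite)"
  shows "K0 \<alpha> TYPE('d) \<ge> 4"
proof -
  have "1 \<le> (\<Sum>\<^sub>\<infinity>k::int^'d. bracket k powr (-2 * \<alpha>))"
    using finite_sum_le_infsum[OF summable_bracket_powr[OF assms], of "{0}"] by simp
  then have "sqrt (4\<^sup>2) \<le> sqrt (20 * (\<Sum>\<^sub>\<infinity>k::int^'d. bracket k powr (-2 * \<alpha>)))"
    by (intro real_sqrt_le_mono) simp
  then show ?thesis unfolding K0_def by simp
qed

lemma K1_nonneg: "K1 \<alpha> s TYPE('d::finite) \<ge> 0"
  unfolding K1_def by (simp add: infsum_nonneg)

lemma le_1_40_if_K0_K1_mult_le:
  assumes "2 * \<alpha> > real CARD('d::finite)"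
    and "(K0 \<alpha> TYPE('d) + K1 \<alpha> \<alpha> TYPE('d)) * m \<le> 1/10" "m \<ge> 0"
  shows "m \<le> 1/40"
proof -
  have "4 \<le> K0 \<alpha> TYPE('d) + K1 \<alpha> \<alpha> TYPE('d)"
    using K0_ge_4[OF assms(1)] K1_nonneg[of \<alpha> \<alpha>, where 'd='d] by linarith
  from mult_right_mono[OF this assms(3)] assms(2) show ?thesis by linarith
qed

theorem lemma4p4:
  fixes B :: "('d::finite) seq set" and nB :: "'d seq \<Rightarrow> real"
    and \<alpha>0 :: real and Q Qi P P' :: "'d mat"
  assumes BA: "seq_banach_algebra B nB"
    and alpha: "\<alpha>0 > real CARD('d) / 2"
    and Q: "Q \<in> M_s B nB \<alpha>0" and Qi: "Qi \<in> M_s B nB \<alpha>0"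
    and inv1: "mat_mult Q Qi = mat_id" and inv2: "mat_mult Qi Q = mat_id"
    and small1: "(K0 \<alpha>0 TYPE('d) + K1 \<alpha>0 \<alpha>0 TYPE('d)) * mnorm nB \<alpha>0 (mat_sub Q mat_id) \<le> 1/10"
    and small2: "(K0 \<alpha>0 TYPE('d) + K1 \<alpha>0 \<alpha>0 TYPE('d)) * mnorm nB \<alpha>0 (mat_sub Qi mat_id) \<le> 1/10"
    and P: "P \<in> M_s B nB \<alpha>0" and P': "P' \<in> M_s B nB \<alpha>0"
  shows "(\<exists>!X. X \<in> M0_inf B nB \<and>
            main_diag (mat_add (mat_mult (mat_mult Qi (mat_add X P)) Q) P') = (\<lambda>_ _. 0))
       \<and> (\<forall>X. X \<in> M0_inf B nB \<and>
            main_diag (mat_add (mat_mult (mat_mult Qi (mat_add X P)) Q) P') = (\<lambda>_ _. 0)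
          \<longrightarrow> mnorm nB \<alpha>0 X \<le> 2 * (mnorm nB \<alpha>0 (mat_mult (mat_mult Qi P) Q) + mnorm nB \<alpha>0 P'))"
proof -
  interpret seq_algebra B nB by (rule seq_algebra.intro[OF BA])
  have s: "2 * \<alpha>0 > real CARD('d)" and s0: "\<alpha>0 \<ge> 0"
    using alpha by (simp_all add: field_simps)
  have near: "mnorm nB \<alpha>0 (mat_sub Qi mat_id) \<le> 1/40" "mnorm nB \<alpha>0 (mat_sub Q mat_id) \<le> 1/40"
    using le_1_40_if_K0_K1_mult_le[OF s] small2 small1 mnorm_nonneg by blast+
  define D where "D = (\<lambda>i. - (mat_mult (mat_mult Qi P) Q i i + P' i i))"
  have D: "D \<in> B \<and> nB D \<le> mnorm nB \<alpha>0 (mat_mult (mat_mult Qi P) Q) + mnorm nB \<alpha>0 P'"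
    unfolding D_def by (intro neg_diag_add_bound mat_mult_M_s Qi P Q P' s)
  have "\<exists>x\<in>B. diag_conj Qi Q x = D \<and> (1 - 1/2) * nB x \<le> nB D \<and>
      (\<forall>y\<in>B. diag_conj Qi Q y = D \<longrightarrow> y = x)"
    by (rule near_identity_solvable[where T="diag_conj Qi Q", OF _ _ _ _ _ D[THEN conjunct1]])
       (fact diag_conj_near_id_half[OF Qi Q s0 near] diag_conj_diff[OF Qi Q s0] | simp)+
  then obtain x where x: "x \<in> B" "diag_conj Qi Q x = D" "(1 - 1/2) * nB x \<le> nB D"
    and uniq: "\<forall>y\<in>B. diag_conj Qi Q y = D \<longrightarrow> y = x"
    by blast
  have "(\<exists>!X. X \<in> M0_inf B nB \<and>
          main_diag (mat_add (mat_mult (mat_mult Qi (mat_add X P)) Q) P') = (\<lambda>_ _. 0)) \<and>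
      (\<forall>X. X \<in> M0_inf B nB \<and>
          main_diag (mat_add (mat_mult (mat_mult Qi (mat_add X P)) Q) P') = (\<lambda>_ _. 0) \<longrightarrow>
        mnorm nB \<alpha>0 X = nB x)"
    by (rule unique_diagonal_solution[OF x(1,2) uniq])
       (use main_diag_conj_eq_0_iff[OF _ _ Qi Q P s] in \<open>simp add: M0_inf_iff D_def\<close>)
  then show ?thesis using x(3) D by auto
qed

end
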